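(* Consider an infinite-horizon MDP with numeric rewards and undiscounted wealth levels, as described in the context. Then, for the lower $\tau$-quantile criterion and for the upper $\tau$-quantile criterion, there exists a stationary deterministic wealth-Markovian policy that is optimal among all policies, in each of the following two cases: (i) $r(s,a)\le 0$ for all $(s,a)\in\mathcal S\times\mathcal A$; (ii) $r(s,a)\ge0$ for all $(s,a)\in\mathcal S\times\mathcal A$, and the optimal lower and upper $\tau$-quantiles admit a finite upper bound.
   Context: An MDP $(\mathcal S,\mathcal A,\mathcal P,r,s_0)$ has finite state set $\mathcal S$, finite action set $\mathcal A$, transition probabilities $\mathcal P(s,a,s')$, a real-valued reward function $r:\mathcal S\times\mathcal A\to\mathbb R$, and initial state $s_0$; the horizon is infinite, and policies are arbitrary (possibly history-dependent, randomized) sequences of decision rules. The wealth of a history $h_t=(s_0,a_0,\dots,s_t)$ is the undiscounted sum $w(h_t)=\sum_{i<t}r(s_i,a_i)$, and the wealth of an infinite episode is the total sum of its rewards (an element of the extended reals, well defined since the rewards have constant sign in each case). For a policy $\pi$, $F^\pi$ and $G^\pi$ are the cumulative ($F^\pi(w)=\mathbb P(\text{wealth}\le w)$) and decumulative ($G^\pi(w)=\mathbb P(\text{wealth}\ge w)$) distribution functions of the episode wealth; lower $\tau$-quantile $\underline{q}^\pi_\tau=\min\{w:F^\pi(w)\ge\tau\}$ ($\tau\in(0,1]$), upper $\tau$-quantile $\overline{q}^\pi_\tau=\max\{w:G^\pi(w)\ge1-\tau\}$ ($\tau\in[0,1)$); a policy is optimal for a criterion if its quantile equals the maximum of that quantile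 over all policies. A policy is stationary deterministic wealth-Markovian if at every time step it applies the same deterministic rule choosing an action as a function of the current state and the current wealth level $w(h_t)$. *)

theory Defs
  imports "HOL-Probability.Probability"
begin

text \<open>
  MDP with finite state type 's, finite action type 'a (all actions available in every state),
  transition kernel P :: 's => 'a => 's pmf, rewards r :: 's => 'a => real, initial state s0.
  A history h_t = (s_0,a_0,...,s_{t-1},a_{t-1},s_t) is represented by the list of past
  state-action pairs together with the current state s_t.  A (general, history-dependent,
  randomized) policy maps each history to a distribution over actions; since the length of the
  history determines the time step t, this is the same as a sequence of decision rules.
\<close>

type_synonym ('s, 'a) policy = "('s \<times> 'a) list \<Rightarrow> 's \<Rightarrow> 'a pmf"

definition cyl_prob ::
  "('s \<Rightarrow> 'a \<Rightarrow> 's pmf) \<Rightarrow> 's \<Rightarrow> ('s, 'a) policy \<Rightarrow> ('s \<times> 'a) list \<Rightarrow> real" where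
  "cyl_prob P s0 \<pi> xs =
     (\<Prod>i<length xs.
        (if i = 0 then (if fst (xs ! 0) = s0 then 1 else 0)
         else pmf (P (fst (xs ! (i - 1))) (snd (xs ! (i - 1)))) (fst (xs ! i)))
        * pmf (\<pi> (take i xs) (fst (xs ! i))) (snd (xs ! i)))"

text \<open>The probability measure on infinite episodes induced by policy \<pi>
  (Ionescu-Tulcea): the probability measure on the stream space whose cylinder
  probabilities are given by cyl_prob (it exists and is unique).\<close>
definition path_measure ::
  "('s \<Rightarrow> 'a \<Rightarrow> 's pmf) \<Rightarrow> 's \<Rightarrow> ('s, 'a) policy \<Rightarrow> ('s \<times> 'a) stream measure" where
  "path_measure P s0 \<pi> =
     (SOME M. sets M = sets (stream_space (count_space UNIV)) \<and> prob_space M \<and>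
        (\<forall>xs. emeasure M (sstart UNIV xs) = ennreal (cyl_prob P s0 \<pi> xs)))"

definition hist_wealth :: "('s \<Rightarrow> 'a \<Rightarrow> real) \<Rightarrow> ('s \<times> 'a) list \<Rightarrow> real" where
  "hist_wealth r h = (\<Sum>(s, a) \<leftarrow> h. r s a)"

definition ep_wealth :: "('s \<Rightarrow> 'a \<Rightarrow> real) \<Rightarrow> ('s \<times> 'a) stream \<Rightarrow> ereal" where
  "ep_wealth r \<omega> = (\<Sum>i. ereal (r (fst (\<omega> !! i)) (snd (\<omega> !! i))))"

definition cdf_w ::
  "('s \<Rightarrow> 'a \<Rightarrow> 's pmf) \<Rightarrow> ('s \<Rightarrow> 'a \<Rightarrow> real) \<Rightarrow> 's \<Rightarrow> ('s, 'a) policy \<Rightarrow> ereal \<Rightarrow> real" where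
  "cdf_w P r s0 \<pi> w =
     measure (path_measure P s0 \<pi>) {\<omega> \<in> space (path_measure P s0 \<pi>). ep_wealth r \<omega> \<le> w}"

definition dcdf_w ::
  "('s \<Rightarrow> 'a \<Rightarrow> 's pmf) \<Rightarrow> ('s \<Rightarrow> 'a \<Rightarrow> real) \<Rightarrow> 's \<Rightarrow> ('s, 'a) policy \<Rightarrow> ereal \<Rightarrow> real" where
  "dcdf_w P r s0 \<pi> w =
     measure (path_measure P s0 \<pi>) {\<omega> \<in> space (path_measure P s0 \<pi>). ep_wealth r \<omega> \<ge> w}"

definition lower_quantile ::
  "('s \<Rightarrow> 'a \<Rightarrow> 's pmf) \<Rightarrow> ('s \<Rightarrow> 'a \<Rightarrow> real) \<Rightarrow> 's \<Rightarrow> ('s, 'a) policy \<Rightarrow> real \<Rightarrow> ereal" where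
  "lower_quantile P r s0 \<pi> \<tau> = (LEAST w. cdf_w P r s0 \<pi> w \<ge> \<tau>)"

definition upper_quantile ::
  "('s \<Rightarrow> 'a \<Rightarrow> 's pmf) \<Rightarrow> ('s \<Rightarrow> 'a \<Rightarrow> real) \<Rightarrow> 's \<Rightarrow> ('s, 'a) policy \<Rightarrow> real \<Rightarrow> ereal" where
  "upper_quantile P r s0 \<pi> \<tau> = (GREATEST w. dcdf_w P r s0 \<pi> w \<ge> 1 - \<tau>)"

definition sdwm_policy :: "('s \<Rightarrow> 'a \<Rightarrow> real) \<Rightarrow> ('s, 'a) policy \<Rightarrow> bool" where
  "sdwm_policy r \<pi> \<longleftrightarrow>
     (\<exists>d :: 's \<Rightarrow> real \<Rightarrow> 'a. \<pi> = (\<lambda>h s. return_pmf (d s (hist_wealth r h))))"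

end

theory Submission
  imports Defs
begin

(*
  Fix a real threshold c. With rewards of constant sign, an episode ends with wealth at least c
  iff every prefix does (rewards <= 0, a safety objective) or some prefix does (rewards >= 0, a
  reachability objective). Both objectives are solved on the product of states and accumulated
  wealth by value iteration, and acting greedily with respect to the limit value -- for
  reachability, greedily and so as to decrease a progress rank -- is an optimal stationary
  deterministic wealth-Markovian policy.

  Constant sign also makes the attainable wealth levels locally finite. Hence every quantile of
  the wealth is such a level, and it is at least c iff the probability of wealth at least c
  exceeds 1 - tau (lower quantile) or reaches 1 - tau (upper quantile). Among the finitely many
  levels below the upper bound some policy attains the largest quantile c*; a wealth-Markovian
  policy that is optimal for the threshold c* then attains c* too.
*)

section \<open>The path measure\<close>

definition step_pmf ::
  "('s \<Rightarrow> 'a \<Rightarrow> 's pmf) \<Rightarrow> 's \<Rightarrow> ('s, 'a) policy \<Rightarrow> ('s \<times> 'a) list \<Rightarrow> ('s \<times> 'a) pmf" where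
  "step_pmf P s0 \<pi> h =
     bind_pmf (if h = [] then return_pmf s0 else P (fst (last h)) (snd (last h)))
       (\<lambda>s. map_pmf (Pair s) (\<pi> h s))"

lemma pmf_step_pmf:
  fixes P :: "'s::finite \<Rightarrow> 'a \<Rightarrow> 's pmf"
  shows "pmf (step_pmf P s0 \<pi> h) (s, a) =
    pmf (if h = [] then return_pmf s0 else P (fst (last h)) (snd (last h))) s * pmf (\<pi> h s) a"
proof -
  let ?\<mu> = "if h = [] then return_pmf s0 else P (fst (last h)) (snd (last h))"
  have pmf_Pair: "pmf (map_pmf (Pair t) (\<pi> h t)) (s, a) = (if t = s then pmf (\<pi> h s) a else 0)" for t
    using pmf_map_inj'[of "Pair s" "\<pi> h s" a] by (auto simp: inj_def pmf_eq_0_set_pmf)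
  have "pmf (step_pmf P s0 \<pi> h) (s, a) = (\<Sum>t\<in>UNIV. pmf (map_pmf (Pair t) (\<pi> h t)) (s, a) * pmf ?\<mu> t)"
    unfolding step_pmf_def pmf_bind by (rule integral_measure_pmf_real) auto
  also have "\<dots> = (\<Sum>t\<in>UNIV. if t = s then pmf ?\<mu> s * pmf (\<pi> h s) a else 0)"
    by (intro sum.cong) (auto simp: pmf_Pair)
  also have "\<dots> = pmf ?\<mu> s * pmf (\<pi> h s) a"
    by simp
  finally show ?thesis .
qed

primrec choice_prefix :: "(('s \<times> 'a) list \<Rightarrow> 's \<times> 'a) \<Rightarrow> nat \<Rightarrow> ('s \<times> 'a) list" where
  "choice_prefix \<xi> 0 = []"
| "choice_prefix \<xi> (Suc n) = choice_prefix \<xi> n @ [\<xi> (choice_prefix \<xi> n)]"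

definition choice_path :: "(('s \<times> 'a) list \<Rightarrow> 's \<times> 'a) \<Rightarrow> ('s \<times> 'a) stream" where
  "choice_path \<xi> = to_stream (\<lambda>n. \<xi> (choice_prefix \<xi> n))"

lemma snth_choice_path: "choice_path \<xi> !! n = \<xi> (choice_prefix \<xi> n)"
  by (simp add: choice_path_def to_stream_def)

lemma stake_choice_path: "stake n (choice_path \<xi>) = choice_prefix \<xi> n"
  by (induction n) (simp_all add: stake_Suc snth_choice_path del: stake.simps)

lemma length_choice_prefix [simp]: "length (choice_prefix \<xi> n) = n"
  by (induction n) simp_all

lemma choice_prefix_eq_iff:
  "choice_prefix \<xi> (length xs) = xs \<longleftrightarrow> (\<forall>i<length xs. \<xi> (take i xs) = xs ! i)"
proof (induction xs rule: rev_induct)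
  case (snoc x xs)
  have "(\<forall>i<length (xs @ [x]). \<xi> (take i (xs @ [x])) = (xs @ [x]) ! i) \<longleftrightarrow>
        (\<forall>i<length xs. \<xi> (take i xs) = xs ! i) \<and> \<xi> xs = x"
    by (auto simp: less_Suc_eq nth_append)
  then show ?case
    using snoc.IH by auto
qed simp

lemma in_sstart_UNIV: "\<omega> \<in> sstart UNIV xs \<longleftrightarrow> stake (length xs) \<omega> = xs"
  by (auto simp: sstart_eq streams_UNIV list_eq_iff_nth_eq)

lemma choice_path_in_sstart:
  "choice_path \<xi> \<in> sstart UNIV xs \<longleftrightarrow> (\<forall>i<length xs. \<xi> (take i xs) = xs ! i)"
  by (simp add: in_sstart_UNIV stake_choice_path choice_prefix_eq_iff)

text \<open>
  Ionescu-Tulcea by a product construction: draw the next state-action pair after every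
  history independently from its step distribution, then follow these choices from the empty
  history. A cylinder only constrains the choices at its own prefixes, which are independent.\<close>

context
  fixes P :: "'s::finite \<Rightarrow> 'a::finite \<Rightarrow> 's pmf" and s0 :: 's and \<pi> :: "('s, 'a) policy"
begin

definition choice_measure :: "(('s \<times> 'a) list \<Rightarrow> 's \<times> 'a) measure" where
  "choice_measure = PiM UNIV (\<lambda>h. measure_pmf (step_pmf P s0 \<pi> h))"

lemma measurable_choice_at: "(\<lambda>\<xi>. \<xi> h) \<in> measurable choice_measure (count_space UNIV)"
proof -
  have "(\<lambda>\<xi>. \<xi> h) \<in> measurable choice_measure (measure_pmf (step_pmf P s0 \<pi> h))"
    unfolding choice_measure_def by (rule measurable_component_singleton) simp
  then show ?thesis
    by (simp add: measurable_cong_sets)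
qed

lemma measurable_choice_prefix:
  "(\<lambda>\<xi>. choice_prefix \<xi> n) \<in> measurable choice_measure (count_space UNIV)"
proof (induction n)
  case (Suc n)
  have "(\<lambda>\<xi>. (\<lambda>h \<xi>. h @ [\<xi> h]) (choice_prefix \<xi> n) \<xi>) \<in> measurable choice_measure (count_space UNIV)"
  proof (rule measurable_compose_countable[OF _ Suc])
    fix h :: "('s \<times> 'a) list"
    show "(\<lambda>\<xi>. h @ [\<xi> h]) \<in> measurable choice_measure (count_space UNIV)"
      using measurable_compose[OF measurable_choice_at[of h], of "\<lambda>x. h @ [x]" "count_space UNIV"]
      by simp
  qed
  then show ?case
    by simp
qed simp

lemma measurable_choice_path:
  "choice_path \<in> measurable choice_measure (stream_space (count_space UNIV))"
proof (rule measurable_stream_space2)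
  fix n
  have "(\<lambda>\<xi>. (\<lambda>h \<xi>. \<xi> h) (choice_prefix \<xi> n) \<xi>) \<in> measurable choice_measure (count_space UNIV)"
    by (rule measurable_compose_countable[OF measurable_choice_at measurable_choice_prefix])
  then show "(\<lambda>\<xi>. choice_path \<xi> !! n) \<in> measurable choice_measure (count_space UNIV)"
    by (simp add: snth_choice_path)
qed

lemma prob_space_choice_measure: "prob_space choice_measure"
  unfolding choice_measure_def by (intro prob_space_PiM) (simp add: prob_space_measure_pmf)

lemma step_pmf_prod_eq_cyl_prob:
  "(\<Prod>i<length xs. pmf (step_pmf P s0 \<pi> (take i xs)) (xs ! i)) = cyl_prob P s0 \<pi> xs"
  unfolding cyl_prob_def
proof (intro prod.cong refl)
  fix i assume i: "i \<in> {..<length xs}"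
  obtain s a where sa: "xs ! i = (s, a)"
    by fastforce
  show "pmf (step_pmf P s0 \<pi> (take i xs)) (xs ! i) =
      (if i = 0 then if fst (xs ! 0) = s0 then 1 else 0
       else pmf (P (fst (xs ! (i - 1))) (snd (xs ! (i - 1)))) (fst (xs ! i))) *
      pmf (\<pi> (take i xs) (fst (xs ! i))) (snd (xs ! i))"
  proof (cases "i = 0")
    case False
    with i have "take i xs \<noteq> []" and "last (take i xs) = xs ! (i - 1)"
      by (cases i; auto simp: take_Suc_conv_app_nth)+
    then show ?thesis
      using sa False by (simp add: pmf_step_pmf)
  qed (use sa in \<open>simp add: pmf_step_pmf pmf_return\<close>)
qed

lemma emeasure_distr_choice_path_sstart:
  "emeasure (distr choice_measure (stream_space (count_space UNIV)) choice_path) (sstart UNIV xs)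
     = ennreal (cyl_prob P s0 \<pi> xs)"
proof -
  interpret product_prob_space "\<lambda>h. measure_pmf (step_pmf P s0 \<pi> h)" UNIV
    by unfold_locales
  have inj: "inj_on (\<lambda>i. take i xs) {..<length xs}"
    by (rule inj_onI) (metis length_take lessThan_iff min.absorb4)
  have "emeasure (distr choice_measure (stream_space (count_space UNIV)) choice_path) (sstart UNIV xs)
      = emeasure choice_measure (choice_path -` sstart UNIV xs \<inter> space choice_measure)"
    by (rule emeasure_distr[OF measurable_choice_path sstart_sets])
  also have "choice_path -` sstart UNIV xs \<inter> space choice_measure =
      {\<xi> \<in> space choice_measure. \<forall>h \<in> (\<lambda>i. take i xs) ` {..<length xs}. \<xi> h \<in> {xs ! length h}}"
    by (auto simp: choice_path_in_sstart)
  also have "emeasure choice_measure \<dots> =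
      (\<Prod>h \<in> (\<lambda>i. take i xs) ` {..<length xs}. emeasure (step_pmf P s0 \<pi> h) {xs ! length h})"
    unfolding choice_measure_def by (rule emeasure_PiM_Collect) auto
  also have "\<dots> = ennreal (\<Prod>i<length xs. pmf (step_pmf P s0 \<pi> (take i xs)) (xs ! i))"
    by (simp add: prod.reindex[OF inj] emeasure_pmf_single prod_ennreal)
  finally show ?thesis
    by (simp add: step_pmf_prod_eq_cyl_prob)
qed

lemma path_measure_exists:
  "\<exists>M. sets M = sets (stream_space (count_space UNIV)) \<and> prob_space M \<and>
        (\<forall>xs. emeasure M (sstart UNIV xs) = ennreal (cyl_prob P s0 \<pi> xs))"
  using prob_space.prob_space_distr[OF prob_space_choice_measure measurable_choice_path]
    emeasure_distr_choice_path_sstart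
  by (intro exI[of _ "distr choice_measure (stream_space (count_space UNIV)) choice_path"]) simp

end

lemma
  fixes P :: "'s::finite \<Rightarrow> 'a::finite \<Rightarrow> 's pmf"
  shows sets_path_measure: "sets (path_measure P s0 \<pi>) = sets (stream_space (count_space UNIV))"
    and prob_space_path_measure: "prob_space (path_measure P s0 \<pi>)"
    and emeasure_path_measure_sstart:
      "emeasure (path_measure P s0 \<pi>) (sstart UNIV xs) = ennreal (cyl_prob P s0 \<pi> xs)"
  using someI_ex[OF path_measure_exists[of P s0 \<pi>]] unfolding path_measure_def by auto

lemma space_path_measure:
  fixes P :: "'s::finite \<Rightarrow> 'a::finite \<Rightarrow> 's pmf"
  shows "space (path_measure P s0 \<pi>) = UNIV"
  using sets_eq_imp_space_eq[OF sets_path_measure[of P s0 \<pi>]]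
  by (simp add: space_stream_space streams_UNIV)

section \<open>Probabilities of prefix events\<close>

lemma sum_pmf_UNIV: "(\<Sum>x\<in>UNIV. pmf (\<mu> :: 'a::finite pmf) x) = 1"
  by (rule sum_pmf_eq_1) auto

text \<open>Replacing the initial state of cyl_prob by an initial distribution makes the cylinder
  probability recursive in the first step.\<close>

fun cylinder_prob :: "('s \<Rightarrow> 'a \<Rightarrow> 's pmf) \<Rightarrow> 's pmf \<Rightarrow> ('s, 'a) policy \<Rightarrow> ('s \<times> 'a) list \<Rightarrow> real" where
  "cylinder_prob P \<mu> \<pi> [] = 1"
| "cylinder_prob P \<mu> \<pi> ((s, a) # xs) =
     pmf \<mu> s * pmf (\<pi> [] s) a * cylinder_prob P (P s a) (\<lambda>h. \<pi> ((s, a) # h)) xs"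

lemma cylinder_prob_nonneg: "0 \<le> cylinder_prob P \<mu> \<pi> xs"
  by (induction P \<mu> \<pi> xs rule: cylinder_prob.induct) simp_all

lemma cylinder_prob_eq_prod:
  "cylinder_prob P \<mu> \<pi> xs =
     (\<Prod>i<length xs.
        (if i = 0 then pmf \<mu> (fst (xs ! 0))
         else pmf (P (fst (xs ! (i - 1))) (snd (xs ! (i - 1)))) (fst (xs ! i)))
        * pmf (\<pi> (take i xs) (fst (xs ! i))) (snd (xs ! i)))"
proof (induction P \<mu> \<pi> xs rule: cylinder_prob.induct)
  case (2 P \<mu> \<pi> s a xs)
  have "(\<Prod>i<length ((s, a) # xs).
        (if i = 0 then pmf \<mu> (fst (((s, a) # xs) ! 0))
         else pmf (P (fst (((s, a) # xs) ! (i - 1))) (snd (((s, a) # xs) ! (i - 1))))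
                (fst (((s, a) # xs) ! i)))
        * pmf (\<pi> (take i ((s, a) # xs)) (fst (((s, a) # xs) ! i))) (snd (((s, a) # xs) ! i)))
      = pmf \<mu> s * pmf (\<pi> [] s) a *
        (\<Prod>i<length xs.
          (if i = 0 then pmf (P s a) (fst (xs ! 0))
           else pmf (P (fst (xs ! (i - 1))) (snd (xs ! (i - 1)))) (fst (xs ! i)))
          * pmf (\<pi> ((s, a) # take i xs) (fst (xs ! i))) (snd (xs ! i)))"
    by (simp only: length_Cons prod.lessThan_Suc_shift)
       (auto intro!: prod.cong arg_cong2[where f = "(*)"] simp: nth_Cons')
  then show ?case
    using 2 by simp
qed simp

lemma cyl_prob_eq_cylinder_prob: "cyl_prob P s0 \<pi> xs = cylinder_prob P (return_pmf s0) \<pi> xs"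
  unfolding cyl_prob_def cylinder_prob_eq_prod by (intro prod.cong refl) (simp add: pmf_return)

lemma cylinder_prob_mixture:
  fixes \<mu> :: "'s::finite pmf"
  assumes "xs \<noteq> []"
  shows "cylinder_prob P \<mu> \<pi> xs = (\<Sum>s\<in>UNIV. pmf \<mu> s * cylinder_prob P (return_pmf s) \<pi> xs)"
proof -
  obtain s a ys where xs: "xs = (s, a) # ys"
    using assms by (metis list.exhaust surj_pair)
  have "(\<Sum>t\<in>UNIV. pmf \<mu> t * cylinder_prob P (return_pmf t) \<pi> xs) =
        (\<Sum>t\<in>UNIV. if t = s then cylinder_prob P \<mu> \<pi> xs else 0)"
    by (intro sum.cong) (auto simp: xs pmf_return)
  then show ?thesis
    by simp
qed

definition prefix_prob ::
  "('s \<Rightarrow> 'a \<Rightarrow> 's pmf) \<Rightarrow> 's pmf \<Rightarrow> ('s, 'a) policy \<Rightarrow> nat \<Rightarrow> (('s \<times> 'a) list \<Rightarrow> bool) \<Rightarrow> real" where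
  "prefix_prob P \<mu> \<pi> n Q = (\<Sum>xs\<in>{xs. length xs = n}. if Q xs then cylinder_prob P \<mu> \<pi> xs else 0)"

lemma prefix_prob_0: "prefix_prob P \<mu> \<pi> 0 Q = (if Q [] then 1 else 0)"
  by (simp add: prefix_prob_def)

lemma prefix_prob_nonneg: "0 \<le> prefix_prob P \<mu> \<pi> n Q"
  unfolding prefix_prob_def by (intro sum_nonneg) (simp add: cylinder_prob_nonneg)

lemma prefix_prob_mono:
  assumes "\<And>xs. Q xs \<Longrightarrow> Q' xs"
  shows "prefix_prob P \<mu> \<pi> n Q \<le> prefix_prob P \<mu> \<pi> n Q'"
  unfolding prefix_prob_def using assms by (intro sum_mono) (auto simp: cylinder_prob_nonneg)

lemma finite_lists_length_eq_UNIV: "finite {xs :: 'a::finite list. length xs = n}"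
  using finite_lists_length_eq[of "UNIV :: 'a set" n] by simp

lemma prefix_prob_Suc:
  fixes P :: "'s::finite \<Rightarrow> 'a::finite \<Rightarrow> 's pmf"
  shows "prefix_prob P \<mu> \<pi> (Suc n) Q =
    (\<Sum>(s, a)\<in>UNIV. pmf \<mu> s * pmf (\<pi> [] s) a *
        prefix_prob P (P s a) (\<lambda>h. \<pi> ((s, a) # h)) n (\<lambda>xs. Q ((s, a) # xs)))"
proof -
  have eq: "{xs :: ('s \<times> 'a) list. length xs = Suc n} = (\<lambda>(x, xs). x # xs) ` (UNIV \<times> {xs. length xs = n})"
    by (auto simp: length_Suc_conv image_iff)
  have inj: "inj_on (\<lambda>(x, xs). x # xs) (UNIV \<times> {xs :: ('s \<times> 'a) list. length xs = n})"
    by (auto simp: inj_on_def)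
  have "prefix_prob P \<mu> \<pi> (Suc n) Q =
      (\<Sum>x\<in>UNIV. \<Sum>xs | length xs = n. if Q (x # xs) then cylinder_prob P \<mu> \<pi> (x # xs) else 0)"
    unfolding prefix_prob_def eq sum.reindex[OF inj]
    by (simp add: sum.cartesian_product case_prod_unfold)
  also have "\<dots> = (\<Sum>(s, a)\<in>UNIV. pmf \<mu> s * pmf (\<pi> [] s) a *
        prefix_prob P (P s a) (\<lambda>h. \<pi> ((s, a) # h)) n (\<lambda>xs. Q ((s, a) # xs)))"
    unfolding prefix_prob_def by (auto simp: sum_distrib_left intro!: sum.cong)
  finally show ?thesis .
qed

lemma prefix_prob_mixture:
  fixes P :: "'s::finite \<Rightarrow> 'a::finite \<Rightarrow> 's pmf"
  shows "prefix_prob P \<mu> \<pi> n Q = (\<Sum>s\<in>UNIV. pmf \<mu> s * prefix_prob P (return_pmf s) \<pi> n Q)"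
proof (cases n)
  case 0
  then show ?thesis
    by (simp add: prefix_prob_0 sum_distrib_right[symmetric] sum_pmf_UNIV)
next
  case (Suc m)
  have "prefix_prob P \<mu> \<pi> n Q =
      (\<Sum>xs | length xs = n. \<Sum>s\<in>UNIV. pmf \<mu> s * (if Q xs then cylinder_prob P (return_pmf s) \<pi> xs else 0))"
    unfolding prefix_prob_def
    by (intro sum.cong refl) (auto simp: Suc intro!: cylinder_prob_mixture)
  also have "\<dots> = (\<Sum>s\<in>UNIV. pmf \<mu> s * prefix_prob P (return_pmf s) \<pi> n Q)"
    unfolding prefix_prob_def by (subst sum.swap) (simp add: sum_distrib_left)
  finally show ?thesis .
qed

lemma prefix_prob_return_Suc:
  fixes P :: "'s::finite \<Rightarrow> 'a::finite \<Rightarrow> 's pmf"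
  shows "prefix_prob P (return_pmf s) \<pi> (Suc n) Q =
    (\<Sum>a\<in>UNIV. pmf (\<pi> [] s) a * (\<Sum>s'\<in>UNIV. pmf (P s a) s' *
        prefix_prob P (return_pmf s') (\<lambda>h. \<pi> ((s, a) # h)) n (\<lambda>xs. Q ((s, a) # xs))))"
proof -
  have "prefix_prob P (return_pmf s) \<pi> (Suc n) Q =
      (\<Sum>t\<in>UNIV. if t = s then (\<Sum>a\<in>UNIV. pmf (\<pi> [] s) a *
        prefix_prob P (P s a) (\<lambda>h. \<pi> ((s, a) # h)) n (\<lambda>xs. Q ((s, a) # xs))) else 0)"
    unfolding prefix_prob_Suc UNIV_Times_UNIV[symmetric] sum.cartesian_product[symmetric]
    by (intro sum.cong refl) (auto simp: pmf_return)
  also have "\<dots> = (\<Sum>a\<in>UNIV. pmf (\<pi> [] s) a *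
        prefix_prob P (P s a) (\<lambda>h. \<pi> ((s, a) # h)) n (\<lambda>xs. Q ((s, a) # xs)))"
    by simp
  finally show ?thesis
    unfolding prefix_prob_mixture[of P "P s _"] .
qed

lemma prefix_prob_True:
  fixes P :: "'s::finite \<Rightarrow> 'a::finite \<Rightarrow> 's pmf"
  shows "prefix_prob P (return_pmf s) \<pi> n (\<lambda>_. True) = 1"
proof (induction n arbitrary: s \<pi>)
  case (Suc n)
  then show ?case
    by (simp add: prefix_prob_return_Suc sum_pmf_UNIV)
qed (simp add: prefix_prob_0)

lemma prefix_prob_le_1:
  fixes P :: "'s::finite \<Rightarrow> 'a::finite \<Rightarrow> 's pmf"
  shows "prefix_prob P (return_pmf s) \<pi> n Q \<le> 1"
  using prefix_prob_mono[of Q "\<lambda>_. True"] prefix_prob_True by metis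

lemma sets_path_measure_prefix:
  fixes P :: "'s::finite \<Rightarrow> 'a::finite \<Rightarrow> 's pmf"
  shows "{\<omega>. Q (stake n \<omega>)} \<in> sets (path_measure P s0 \<pi>)"
proof -
  have "{\<omega>. Q (stake n \<omega>)} = (\<Union>xs\<in>{xs. length xs = n \<and> Q xs}. sstart UNIV xs)"
    by (auto simp: in_sstart_UNIV)
  also have "\<dots> \<in> sets (path_measure P s0 \<pi>)"
    unfolding sets_path_measure
    by (intro sets.countable_UN' countable_finite)
       (auto intro: sstart_sets finite_subset[OF _ finite_lists_length_eq_UNIV[of n]])
  finally show ?thesis .
qed

lemma measure_path_measure_prefix:
  fixes P :: "'s::finite \<Rightarrow> 'a::finite \<Rightarrow> 's pmf"
  shows "measure (path_measure P s0 \<pi>) {\<omega>. Q (stake n \<omega>)} = prefix_prob P (return_pmf s0) \<pi> n Q"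
proof -
  let ?L = "{xs :: ('s \<times> 'a) list. length xs = n \<and> Q xs}"
  interpret prob_space "path_measure P s0 \<pi>"
    by (rule prob_space_path_measure)
  have "measure (path_measure P s0 \<pi>) {\<omega>. Q (stake n \<omega>)} =
      measure (path_measure P s0 \<pi>) (\<Union>xs\<in>?L. sstart UNIV xs)"
    by (rule arg_cong[where f = "measure _"]) (auto simp: in_sstart_UNIV)
  also have "\<dots> = (\<Sum>xs\<in>?L. measure (path_measure P s0 \<pi>) (sstart UNIV xs))"
  proof (rule finite_measure_finite_Union)
    show "finite ?L"
      by (rule finite_subset[OF _ finite_lists_length_eq_UNIV[of n]]) auto
    show "disjoint_family_on (\<lambda>xs. sstart UNIV xs) ?L"
      by (auto simp: disjoint_family_on_def in_sstart_UNIV)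
  qed (auto simp: sets_path_measure sstart_sets)
  also have "\<dots> = (\<Sum>xs\<in>?L. cylinder_prob P (return_pmf s0) \<pi> xs)"
    by (intro sum.cong refl)
       (simp add: measure_def emeasure_path_measure_sstart cyl_prob_eq_cylinder_prob cylinder_prob_nonneg)
  also have "\<dots> = prefix_prob P (return_pmf s0) \<pi> n Q"
    unfolding prefix_prob_def
    by (rule sum.mono_neutral_cong_left[OF finite_lists_length_eq_UNIV[of n]]) auto
  finally show ?thesis .
qed

section \<open>Wealth\<close>

lemma hist_wealth_Nil [simp]: "hist_wealth r [] = 0"
  by (simp add: hist_wealth_def)

lemma hist_wealth_Cons [simp]: "hist_wealth r (x # xs) = r (fst x) (snd x) + hist_wealth r xs"
  by (simp add: hist_wealth_def case_prod_beta)

lemma hist_wealth_append [simp]: "hist_wealth r (xs @ ys) = hist_wealth r xs + hist_wealth r ys"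
  by (induction xs) auto

lemma hist_wealth_stake: "hist_wealth r (stake n \<omega>) = (\<Sum>i<n. r (fst (\<omega> !! i)) (snd (\<omega> !! i)))"
  by (induction n) (simp_all add: stake_Suc del: stake.simps(2))

lemma hist_wealth_nonpos: "\<forall>s a. r s a \<le> 0 \<Longrightarrow> hist_wealth r h \<le> 0"
  by (induction h) (auto simp: add_nonpos_nonpos)

lemma hist_wealth_nonneg: "\<forall>s a. 0 \<le> r s a \<Longrightarrow> 0 \<le> hist_wealth r h"
  by (induction h) auto

definition constant_sign :: "('s \<Rightarrow> 'a \<Rightarrow> real) \<Rightarrow> bool" where
  "constant_sign r \<longleftrightarrow> (\<forall>s a. r s a \<le> 0) \<or> (\<forall>s a. 0 \<le> r s a)"

definition wealth_levels :: "('s \<Rightarrow> 'a \<Rightarrow> real) \<Rightarrow> real set" where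
  "wealth_levels r = range (hist_wealth r)"

lemma abs_sum_list_constant_sign:
  fixes ys :: "real list"
  assumes "(\<forall>y\<in>set ys. y \<le> 0) \<or> (\<forall>y\<in>set ys. 0 \<le> y)"
  shows "\<bar>sum_list ys\<bar> = sum_list (map abs ys)"
  using assms
proof
  assume "\<forall>y\<in>set ys. y \<le> 0"
  then show ?thesis
  proof (induction ys)
    case (Cons y ys)
    from Cons.prems have "sum_list ys \<le> 0"
      by (simp add: sum_list_nonpos)
    with Cons show ?case
      by auto
  qed simp
next
  assume "\<forall>y\<in>set ys. 0 \<le> y"
  then show ?thesis
  proof (induction ys)
    case (Cons y ys)
    from Cons.prems have "0 \<le> sum_list ys"
      by (simp add: sum_list_nonneg)
    with Cons show ?case
      by (simp add: sum_list_nonneg)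
  qed simp
qed

lemma length_mult_le_sum_list_abs:
  fixes ys :: "real list"
  assumes "\<forall>y\<in>set ys. \<delta> \<le> \<bar>y\<bar>"
  shows "real (length ys) * \<delta> \<le> sum_list (map abs ys)"
  using assms by (induction ys) (auto simp: algebra_simps)

lemma finite_bounded_sum_lists:
  fixes N :: "real set"
  assumes "finite N" "0 \<notin> N" and sign: "(\<forall>y\<in>N. y \<le> 0) \<or> (\<forall>y\<in>N. 0 \<le> y)"
  shows "finite {sum_list ys | ys. set ys \<subseteq> N \<and> \<bar>sum_list ys\<bar> \<le> L}"
proof (cases "N = {}")
  case True
  then have "{sum_list ys | ys. set ys \<subseteq> N \<and> \<bar>sum_list ys\<bar> \<le> L} \<subseteq> {0}"
    by auto
  then show ?thesis
    by (rule finite_subset) simp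
next
  case False
  define \<delta> where "\<delta> = Min (abs ` N)"
  have "0 < \<delta>"
    unfolding \<delta>_def using assms False by (subst Min_gr_iff) auto
  define K where "K = nat \<lceil>L / \<delta>\<rceil>"
  have "length ys \<le> K" if "set ys \<subseteq> N" "\<bar>sum_list ys\<bar> \<le> L" for ys
  proof -
    have "real (length ys) * \<delta> \<le> sum_list (map abs ys)"
      using that \<open>finite N\<close> by (intro length_mult_le_sum_list_abs) (auto simp: \<delta>_def)
    also have "\<dots> = \<bar>sum_list ys\<bar>"
      using sign that by (intro abs_sum_list_constant_sign [symmetric]) auto
    finally have "real (length ys) \<le> L / \<delta>"
      using that \<open>0 < \<delta>\<close> by (simp add: field_simps)
    then show ?thesis
      unfolding K_def by linarith
  qed
  then have "{sum_list ys | ys. set ys \<subseteq> N \<and> \<bar>sum_list ys\<bar> \<le> L} \<subseteq>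
      sum_list ` {ys. set ys \<subseteq> N \<and> length ys \<le> K}"
    by auto
  then show ?thesis
    using finite_lists_length_le[OF \<open>finite N\<close>] finite_subset by blast
qed

text \<open>Constant sign is what makes the wealth levels locally finite: only finitely many
  non-zero rewards fit into a bounded total.\<close>

lemma finite_wealth_levels_Icc:
  fixes r :: "'s::finite \<Rightarrow> 'a::finite \<Rightarrow> real"
  assumes "constant_sign r"
  shows "finite (wealth_levels r \<inter> {a..b})"
proof -
  let ?N = "range (case_prod r) - {0}"
  let ?nonzero = "\<lambda>h. filter (\<lambda>x. x \<noteq> 0) (map (case_prod r) h)"
  have sign: "(\<forall>y\<in>?N. y \<le> 0) \<or> (\<forall>y\<in>?N. 0 \<le> y)"
    using assms unfolding constant_sign_def by auto
  have "finite {sum_list ys | ys. set ys \<subseteq> ?N \<and> \<bar>sum_list ys\<bar> \<le> max \<bar>a\<bar> \<bar>b\<bar>}"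
    by (rule finite_bounded_sum_lists[OF _ _ sign]) simp_all
  moreover have "wealth_levels r \<inter> {a..b} \<subseteq>
      {sum_list ys | ys. set ys \<subseteq> ?N \<and> \<bar>sum_list ys\<bar> \<le> max \<bar>a\<bar> \<bar>b\<bar>}"
  proof
    fix x assume "x \<in> wealth_levels r \<inter> {a..b}"
    then obtain h where x: "x = hist_wealth r h" "a \<le> x" "x \<le> b"
      by (auto simp: wealth_levels_def)
    have "hist_wealth r h = sum_list (?nonzero h)"
      by (induction h) (auto simp: case_prod_beta)
    moreover have "set (?nonzero h) \<subseteq> ?N"
      by auto
    ultimately show "x \<in> {sum_list ys | ys. set ys \<subseteq> ?N \<and> \<bar>sum_list ys\<bar> \<le> max \<bar>a\<bar> \<bar>b\<bar>}"
      using x by (intro CollectI exI[of _ "?nonzero h"]) auto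
  qed
  ultimately show ?thesis
    by (rule finite_subset[rotated])
qed

lemma ep_wealth_eq_INF:
  assumes "\<forall>s a. r s a \<le> 0"
  shows "ep_wealth r \<omega> = (INF n. ereal (hist_wealth r (stake n \<omega>)))"
proof -
  have "decseq (\<lambda>n. ereal (hist_wealth r (stake n \<omega>)))"
    by (rule decseq_SucI) (simp add: stake_Suc assms del: stake.simps)
  then have "(\<lambda>i. ereal (r (fst (\<omega> !! i)) (snd (\<omega> !! i)))) sums (INF n. ereal (hist_wealth r (stake n \<omega>)))"
    unfolding sums_def by (simp add: hist_wealth_stake sum_ereal LIMSEQ_INF)
  then show ?thesis
    unfolding ep_wealth_def by (simp add: sums_unique[symmetric])
qed

lemma ep_wealth_eq_SUP:
  assumes "\<forall>s a. 0 \<le> r s a"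
  shows "ep_wealth r \<omega> = (SUP n. ereal (hist_wealth r (stake n \<omega>)))"
proof -
  have "incseq (\<lambda>n. ereal (hist_wealth r (stake n \<omega>)))"
    by (rule incseq_SucI) (simp add: stake_Suc assms del: stake.simps)
  then have "(\<lambda>i. ereal (r (fst (\<omega> !! i)) (snd (\<omega> !! i)))) sums (SUP n. ereal (hist_wealth r (stake n \<omega>)))"
    unfolding sums_def by (simp add: hist_wealth_stake sum_ereal LIMSEQ_SUP)
  then show ?thesis
    unfolding ep_wealth_def by (simp add: sums_unique[symmetric])
qed

lemma ep_wealth_attained:
  fixes r :: "'s::finite \<Rightarrow> 'a::finite \<Rightarrow> real"
  assumes "constant_sign r" and d: "ep_wealth r \<omega> = ereal d"
  shows "\<exists>n. hist_wealth r (stake n \<omega>) = d"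
proof -
  let ?S = "range (\<lambda>n. ereal (hist_wealth r (stake n \<omega>)))"
  have finite_S: "finite ?S" if "range (\<lambda>n. hist_wealth r (stake n \<omega>)) \<subseteq> {a..b}" for a b
  proof -
    have "?S \<subseteq> ereal ` (wealth_levels r \<inter> {a..b})"
      using that by (auto simp: wealth_levels_def)
    then show ?thesis
      using finite_wealth_levels_Icc[OF assms(1)] finite_subset by blast
  qed
  have "ereal d \<in> ?S"
  proof (cases "\<forall>s a. r s a \<le> 0")
    case True
    then have inf: "ereal d = Inf ?S"
      using d ep_wealth_eq_INF[OF True] by simp
    have "d \<le> hist_wealth r (stake n \<omega>)" for n
      using inf by (metis INF_lower UNIV_I ereal_less_eq(3))
    then have "finite ?S"
      using True by (intro finite_S[of d 0]) (auto simp: hist_wealth_nonpos)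
    then show ?thesis
      using Min_in[of ?S] Min_Inf[of ?S] inf by (metis UNIV_not_empty image_is_empty)
  next
    case False
    then have nonneg: "\<forall>s a. 0 \<le> r s a"
      using assms(1) unfolding constant_sign_def by auto
    then have sup: "ereal d = Sup ?S"
      using d ep_wealth_eq_SUP[OF nonneg] by simp
    have "hist_wealth r (stake n \<omega>) \<le> d" for n
      using sup by (metis SUP_upper UNIV_I ereal_less_eq(3))
    then have "finite ?S"
      using nonneg by (intro finite_S[of 0 d]) (auto simp: hist_wealth_nonneg)
    then show ?thesis
      using Max_in[of ?S] Max_Sup[of ?S] sup by (metis UNIV_not_empty image_is_empty)
  qed
  then show ?thesis
    by auto
qed

lemma ep_wealth_cases:
  fixes r :: "'s::finite \<Rightarrow> 'a::finite \<Rightarrow> real"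
  assumes "constant_sign r"
  shows "ep_wealth r \<omega> = -\<infinity> \<or> ep_wealth r \<omega> = \<infinity> \<or> (\<exists>d\<in>wealth_levels r. ep_wealth r \<omega> = ereal d)"
proof (cases "ep_wealth r \<omega>")
  case (real d)
  then obtain n where "hist_wealth r (stake n \<omega>) = d"
    using ep_wealth_attained[OF assms] by blast
  then show ?thesis
    using real unfolding wealth_levels_def by blast
qed auto

lemma ereal_le_ep_wealth_iff_nonpos:
  assumes "\<forall>s a. r s a \<le> 0"
  shows "ereal c \<le> ep_wealth r \<omega> \<longleftrightarrow> (\<forall>n. c \<le> hist_wealth r (stake n \<omega>))"
  by (simp add: ep_wealth_eq_INF[OF assms] le_INF_iff)

lemma ereal_le_ep_wealth_iff_nonneg:
  fixes r :: "'s::finite \<Rightarrow> 'a::finite \<Rightarrow> real"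
  assumes nonneg: "\<forall>s a. 0 \<le> r s a"
  shows "ereal c \<le> ep_wealth r \<omega> \<longleftrightarrow> (\<exists>n. c \<le> hist_wealth r (stake n \<omega>))"
proof
  assume "\<exists>n. c \<le> hist_wealth r (stake n \<omega>)"
  then show "ereal c \<le> ep_wealth r \<omega>"
    by (auto simp: ep_wealth_eq_SUP[OF nonneg] intro: SUP_upper2)
next
  assume c: "ereal c \<le> ep_wealth r \<omega>"
  have "constant_sign r"
    using nonneg by (simp add: constant_sign_def)
  show "\<exists>n. c \<le> hist_wealth r (stake n \<omega>)"
  proof (cases "ep_wealth r \<omega>")
    case (real d)
    then show ?thesis
      using ep_wealth_attained[OF \<open>constant_sign r\<close>] c by force
  next
    case PInf
    then have "ereal c < (SUP n. ereal (hist_wealth r (stake n \<omega>)))"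
      using ep_wealth_eq_SUP[OF nonneg] by simp
    then obtain n where "ereal c < ereal (hist_wealth r (stake n \<omega>))"
      by (auto simp: less_SUP_iff)
    then show ?thesis
      by (auto intro: less_imp_le)
  qed (use c in simp)
qed

lemma measurable_ep_wealth:
  fixes r :: "'s::finite \<Rightarrow> 'a::finite \<Rightarrow> real"
  assumes "constant_sign r"
  shows "ep_wealth r \<in> borel_measurable (stream_space (count_space UNIV))"
proof -
  have "(\<lambda>\<omega>. ereal (hist_wealth r (stake n \<omega>))) \<in> borel_measurable (stream_space (count_space UNIV))" for n
    using measurable_compose[OF measurable_stake[of n] measurable_count_space[of "\<lambda>h. ereal (hist_wealth r h)"]]
    by simp
  moreover have "ep_wealth r = (\<lambda>\<omega>. INF n. ereal (hist_wealth r (stake n \<omega>))) \<or>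
      ep_wealth r = (\<lambda>\<omega>. SUP n. ereal (hist_wealth r (stake n \<omega>)))"
    using assms ep_wealth_eq_INF ep_wealth_eq_SUP unfolding constant_sign_def by blast
  ultimately show ?thesis
    by auto
qed

section \<open>Threshold probabilities\<close>

text \<open>Counting wealth from an initial level w0 makes the continuation of a
  wealth-Markovian policy after one step again of this form.\<close>

definition wealth_policy :: "('s \<Rightarrow> 'a \<Rightarrow> real) \<Rightarrow> ('s \<Rightarrow> real \<Rightarrow> 'a) \<Rightarrow> real \<Rightarrow> ('s, 'a) policy" where
  "wealth_policy r d w0 = (\<lambda>h s. return_pmf (d s (w0 + hist_wealth r h)))"

lemma wealth_policy_Cons: "(\<lambda>h. wealth_policy r d w ((s, a) # h)) = wealth_policy r d (w + r s a)"
  by (auto simp: wealth_policy_def add.assoc fun_eq_iff)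

lemma sdwm_policy_wealth_policy: "sdwm_policy r (wealth_policy r d 0)"
  unfolding sdwm_policy_def wealth_policy_def by auto

lemma sum_pmf_return_mult:
  fixes f :: "'a::finite \<Rightarrow> real"
  shows "(\<Sum>a\<in>UNIV. pmf (return_pmf a0) a * f a) = f a0"
proof -
  have "(\<Sum>a\<in>UNIV. pmf (return_pmf a0) a * f a) = (\<Sum>a\<in>UNIV. if a = a0 then f a0 else 0)"
    by (intro sum.cong refl) (auto simp: pmf_return)
  then show ?thesis
    by simp
qed

lemma sum_pmf_mult_le_Max:
  fixes f :: "'a::finite \<Rightarrow> real"
  shows "(\<Sum>a\<in>UNIV. pmf \<mu> a * f a) \<le> Max (range f)"
proof -
  have "(\<Sum>a\<in>UNIV. pmf \<mu> a * f a) \<le> (\<Sum>a\<in>UNIV. pmf \<mu> a * Max (range f))"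
    by (intro sum_mono mult_left_mono) auto
  also have "\<dots> = Max (range f)"
    by (simp add: sum_distrib_right[symmetric] sum_pmf_UNIV)
  finally show ?thesis .
qed

context
  fixes P :: "'s::finite \<Rightarrow> 'a::finite \<Rightarrow> 's pmf" and r :: "'s \<Rightarrow> 'a \<Rightarrow> real" and c :: real
begin

definition prob_wealth_ge :: "('s, 'a) policy \<Rightarrow> 's \<Rightarrow> real" where
  "prob_wealth_ge \<pi> s =
     measure (path_measure P s \<pi>) {\<omega> \<in> space (path_measure P s \<pi>). ereal c \<le> ep_wealth r \<omega>}"

definition prob_wealth_ge_after :: "('s, 'a) policy \<Rightarrow> 's \<Rightarrow> nat \<Rightarrow> real \<Rightarrow> real" where
  "prob_wealth_ge_after \<pi> s n w = prefix_prob P (return_pmf s) \<pi> n (\<lambda>xs. c \<le> w + hist_wealth r xs)"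

lemma prob_wealth_ge_after_0: "prob_wealth_ge_after \<pi> s 0 w = (if c \<le> w then 1 else 0)"
  by (simp add: prob_wealth_ge_after_def prefix_prob_0)

lemma prob_wealth_ge_after_Suc:
  "prob_wealth_ge_after \<pi> s (Suc n) w =
     (\<Sum>a\<in>UNIV. pmf (\<pi> [] s) a * (\<Sum>s'\<in>UNIV. pmf (P s a) s' *
        prob_wealth_ge_after (\<lambda>h. \<pi> ((s, a) # h)) s' n (w + r s a)))"
  unfolding prob_wealth_ge_after_def prefix_prob_return_Suc by (simp add: add.assoc)

lemma prob_wealth_ge_after_nonneg: "0 \<le> prob_wealth_ge_after \<pi> s n w"
  by (simp add: prob_wealth_ge_after_def prefix_prob_nonneg)

lemma prob_wealth_ge_after_le_1: "prob_wealth_ge_after \<pi> s n w \<le> 1"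
  by (simp add: prob_wealth_ge_after_def prefix_prob_le_1)

lemma prob_wealth_ge_after_eq_measure:
  "prob_wealth_ge_after \<pi> s n w =
     measure (path_measure P s \<pi>) {\<omega>. c \<le> w + hist_wealth r (stake n \<omega>)}"
  unfolding prob_wealth_ge_after_def by (rule measure_path_measure_prefix[symmetric])

lemma prob_wealth_ge_after_eq_0:
  "(\<And>xs. w + hist_wealth r xs < c) \<Longrightarrow> prob_wealth_ge_after \<pi> s n w = 0"
  unfolding prob_wealth_ge_after_def prefix_prob_def by (simp add: not_le[symmetric])

lemma prob_wealth_ge_after_eq_1:
  "(\<And>xs. c \<le> w + hist_wealth r xs) \<Longrightarrow> prob_wealth_ge_after \<pi> s n w = 1"
  unfolding prob_wealth_ge_after_def using prefix_prob_True by simp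

lemma prob_wealth_ge_le_after:
  assumes "\<forall>s a. r s a \<le> 0"
  shows "prob_wealth_ge \<pi> s \<le> prob_wealth_ge_after \<pi> s n 0"
proof -
  interpret prob_space "path_measure P s \<pi>"
    by (rule prob_space_path_measure)
  show ?thesis
    unfolding prob_wealth_ge_after_eq_measure prob_wealth_ge_def
    using sets_path_measure_prefix[of "\<lambda>xs. c \<le> hist_wealth r xs"]
    by (intro finite_measure_mono) (auto simp: ereal_le_ep_wealth_iff_nonpos[OF assms])
qed

lemma prob_wealth_ge_after_tendsto_of_nonpos:
  assumes "\<forall>s a. r s a \<le> 0"
  shows "(\<lambda>n. prob_wealth_ge_after \<pi> s n 0) \<longlonglongrightarrow> prob_wealth_ge \<pi> s"
proof -
  interpret prob_space "path_measure P s \<pi>"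
    by (rule prob_space_path_measure)
  let ?E = "\<lambda>n. {\<omega>. c \<le> hist_wealth r (stake n \<omega>)}"
  have "range ?E \<subseteq> events"
    using sets_path_measure_prefix[of "\<lambda>xs. c \<le> hist_wealth r xs"] by auto
  moreover have "decseq ?E"
    by (rule decseq_SucI) (auto simp: stake_Suc assms intro: order_trans simp del: stake.simps)
  moreover have "{\<omega> \<in> space (path_measure P s \<pi>). ereal c \<le> ep_wealth r \<omega>} = (\<Inter>n. ?E n)"
    by (auto simp: space_path_measure ereal_le_ep_wealth_iff_nonpos[OF assms])
  ultimately show ?thesis
    unfolding prob_wealth_ge_after_eq_measure prob_wealth_ge_def
    by (simp add: finite_Lim_measure_decseq)
qed

lemma prob_wealth_ge_after_tendsto_of_nonneg:
  assumes "\<forall>s a. 0 \<le> r s a"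
  shows "(\<lambda>n. prob_wealth_ge_after \<pi> s n 0) \<longlonglongrightarrow> prob_wealth_ge \<pi> s"
proof -
  interpret prob_space "path_measure P s \<pi>"
    by (rule prob_space_path_measure)
  let ?E = "\<lambda>n. {\<omega>. c \<le> hist_wealth r (stake n \<omega>)}"
  have "range ?E \<subseteq> events"
    using sets_path_measure_prefix[of "\<lambda>xs. c \<le> hist_wealth r xs"] by auto
  moreover have "incseq ?E"
    by (rule incseq_SucI) (auto simp: stake_Suc assms intro: order_trans simp del: stake.simps)
  moreover have "{\<omega> \<in> space (path_measure P s \<pi>). ereal c \<le> ep_wealth r \<omega>} = (\<Union>n. ?E n)"
    by (auto simp: space_path_measure ereal_le_ep_wealth_iff_nonneg[OF assms])
  ultimately show ?thesis
    unfolding prob_wealth_ge_after_eq_measure prob_wealth_ge_def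
    by (simp add: finite_Lim_measure_incseq)
qed

lemma prob_wealth_ge_after_mono_of_nonneg:
  assumes "\<forall>s a. 0 \<le> r s a"
  shows "prob_wealth_ge_after \<pi> s n w \<le> prob_wealth_ge_after \<pi> s (Suc n) w"
proof -
  interpret prob_space "path_measure P s \<pi>"
    by (rule prob_space_path_measure)
  show ?thesis
    unfolding prob_wealth_ge_after_eq_measure
    using sets_path_measure_prefix[of "\<lambda>xs. c \<le> w + hist_wealth r xs" "Suc n"]
    by (intro finite_measure_mono)
       (auto simp: stake_Suc assms intro: order_trans simp del: stake.simps)
qed

end

section \<open>One-step lookahead\<close>

definition q_value ::
  "('s::finite \<Rightarrow> 'a \<Rightarrow> 's pmf) \<Rightarrow> ('s \<Rightarrow> 'a \<Rightarrow> real) \<Rightarrow> ('s \<Rightarrow> real \<Rightarrow> real) \<Rightarrow> 's \<Rightarrow> real \<Rightarrow> 'a \<Rightarrow> real" where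
  "q_value P r f s w a = (\<Sum>s'\<in>UNIV. pmf (P s a) s' * f s' (w + r s a))"

lemma q_value_mono:
  "(\<And>s w. f s w \<le> g s w) \<Longrightarrow> q_value P r f s w a \<le> q_value P r g s w a"
  unfolding q_value_def by (intro sum_mono mult_left_mono) auto

lemma q_value_nonneg: "(\<And>s w. 0 \<le> f s w) \<Longrightarrow> 0 \<le> q_value P r f s w a"
  unfolding q_value_def by (intro sum_nonneg) auto

lemma q_value_const: "q_value P r (\<lambda>_ _. x) s w a = x"
  by (simp add: q_value_def sum_distrib_right[symmetric] sum_pmf_UNIV)

lemma q_value_le_1: "(\<And>s w. f s w \<le> 1) \<Longrightarrow> q_value P r f s w a \<le> 1"
  using q_value_mono[of f "\<lambda>_ _. 1"] q_value_const by metis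

lemma q_value_tendsto:
  "(\<And>s w. (\<lambda>n. F n s w) \<longlonglongrightarrow> f s w) \<Longrightarrow> (\<lambda>n. q_value P r (F n) s w a) \<longlonglongrightarrow> q_value P r f s w a"
  unfolding q_value_def by (intro tendsto_sum tendsto_mult_left)

lemma Max_q_value_mono:
  fixes P :: "'s::finite \<Rightarrow> 'a::finite \<Rightarrow> 's pmf"
  assumes "\<And>s w. f s w \<le> g s w"
  shows "Max (range (q_value P r f s w)) \<le> Max (range (q_value P r g s w))"
proof (rule Max.boundedI)
  fix x assume "x \<in> range (q_value P r f s w)"
  then obtain a where "x = q_value P r f s w a"
    by blast
  also have "\<dots> \<le> q_value P r g s w a"
    using assms by (rule q_value_mono)
  also have "\<dots> \<le> Max (range (q_value P r g s w))"
    by (rule Max_ge) simp_all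
  finally show "x \<le> Max (range (q_value P r g s w))" .
qed simp_all

lemma Max_q_value_bounds:
  fixes P :: "'s::finite \<Rightarrow> 'a::finite \<Rightarrow> 's pmf"
  assumes "\<And>s w. 0 \<le> f s w" "\<And>s w. f s w \<le> 1"
  shows "0 \<le> Max (range (q_value P r f s w))" "Max (range (q_value P r f s w)) \<le> 1"
  using assms by (auto simp: Max_ge_iff intro: q_value_nonneg q_value_le_1)

lemma prob_wealth_ge_after_wealth_policy_Suc:
  "prob_wealth_ge_after P r c (wealth_policy r d w) s (Suc n) w =
     q_value P r (\<lambda>s' w'. prob_wealth_ge_after P r c (wealth_policy r d w') s' n w') s w (d s w)"
  unfolding prob_wealth_ge_after_Suc wealth_policy_Cons q_value_def
  by (simp add: wealth_policy_def sum_pmf_return_mult)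

lemma prob_wealth_ge_after_Suc_le_Max:
  assumes "\<And>a s' \<pi>'. prob_wealth_ge_after P r c \<pi>' s' n (w + r s a) \<le> f s' (w + r s a)"
  shows "prob_wealth_ge_after P r c \<pi> s (Suc n) w \<le> Max (range (q_value P r f s w))"
proof -
  have "prob_wealth_ge_after P r c \<pi> s (Suc n) w \<le> (\<Sum>a\<in>UNIV. pmf (\<pi> [] s) a * q_value P r f s w a)"
    unfolding prob_wealth_ge_after_Suc q_value_def using assms
    by (intro sum_mono mult_left_mono) auto
  also have "\<dots> \<le> Max (range (q_value P r f s w))"
    by (rule sum_pmf_mult_le_Max)
  finally show ?thesis .
qed

section \<open>Nonpositive rewards: a safety problem\<close>

text \<open>With nonpositive rewards, wealth at least c forever means wealth at least c after every
  step, and safe_iter P r c n is the optimal probability of this for n steps.\<close>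

fun safe_iter :: "('s::finite \<Rightarrow> 'a::finite \<Rightarrow> 's pmf) \<Rightarrow> ('s \<Rightarrow> 'a \<Rightarrow> real) \<Rightarrow> real \<Rightarrow> nat \<Rightarrow> 's \<Rightarrow> real \<Rightarrow> real" where
  "safe_iter P r c 0 s w = (if c \<le> w then 1 else 0)"
| "safe_iter P r c (Suc n) s w = (if c \<le> w then Max (range (q_value P r (safe_iter P r c n) s w)) else 0)"

context
  fixes P :: "'s::finite \<Rightarrow> 'a::finite \<Rightarrow> 's pmf" and r :: "'s \<Rightarrow> 'a \<Rightarrow> real" and c :: real
  assumes nonpos: "\<forall>s a. r s a \<le> 0"
begin

lemma safe_iter_bounds: "0 \<le> safe_iter P r c n s w \<and> safe_iter P r c n s w \<le> 1"
proof (induction n arbitrary: s w)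
  case (Suc n)
  then show ?case
    using Max_q_value_bounds[of "safe_iter P r c n" P r s w] by auto
qed simp

lemma safe_iter_Suc_le: "safe_iter P r c (Suc n) s w \<le> safe_iter P r c n s w"
proof (induction n arbitrary: s w)
  case 0
  then show ?case
    using Max_q_value_bounds[of "safe_iter P r c 0" P r s w] safe_iter_bounds by simp
next
  case (Suc n)
  then show ?case
    using Max_q_value_mono[of "safe_iter P r c (Suc n)" "safe_iter P r c n" P r s w] by simp
qed

lemma prob_wealth_ge_after_le_safe_iter: "prob_wealth_ge_after P r c \<pi> s n w \<le> safe_iter P r c n s w"
proof (induction n arbitrary: \<pi> s w)
  case (Suc n)
  show ?case
  proof (cases "c \<le> w")
    case True
    then show ?thesis
      using prob_wealth_ge_after_Suc_le_Max[OF Suc] by simp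
  next
    case False
    then have "w + hist_wealth r xs < c" for xs
      using hist_wealth_nonpos[OF nonpos, of xs] by linarith
    then show ?thesis
      using False by (simp add: prob_wealth_ge_after_eq_0)
  qed
qed (simp add: prob_wealth_ge_after_0)

definition safe_value :: "'s \<Rightarrow> real \<Rightarrow> real" where
  "safe_value s w = (INF n. safe_iter P r c n s w)"

lemma bdd_below_safe_iter: "bdd_below (range (\<lambda>n. safe_iter P r c n s w))"
  using safe_iter_bounds by (intro bdd_belowI[of _ 0]) auto

lemma safe_value_le_iter: "safe_value s w \<le> safe_iter P r c n s w"
  unfolding safe_value_def by (rule cINF_lower[OF bdd_below_safe_iter]) simp

lemma safe_iter_tendsto: "(\<lambda>n. safe_iter P r c n s w) \<longlonglongrightarrow> safe_value s w"
  unfolding safe_value_def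
  by (rule LIMSEQ_decseq_INF[OF bdd_below_safe_iter]) (rule decseq_SucI, rule safe_iter_Suc_le)

lemma safe_value_nonneg: "0 \<le> safe_value s w"
  unfolding safe_value_def using safe_iter_bounds by (intro cINF_greatest) auto

text \<open>The maximum over the finitely many actions commutes with the decreasing limit.\<close>

lemma safe_greedy_action_exists: "\<exists>a. safe_value s w \<le> q_value P r safe_value s w a"
proof (cases "c \<le> w")
  case False
  then have "safe_value s w \<le> 0"
    using safe_value_le_iter[of s w 0] by simp
  then show ?thesis
    using q_value_nonneg[of safe_value] safe_value_nonneg by (meson order_trans)
next
  case True
  show ?thesis
  proof (rule ccontr)
    assume "\<not> ?thesis"
    then have "\<And>a. q_value P r safe_value s w a < safe_value s w"
      by (simp add: not_le)
    then have "\<forall>\<^sub>F n in sequentially. q_value P r (safe_iter P r c n) s w a < safe_value s w" for a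
      by (rule order_tendstoD(2)[OF q_value_tendsto[OF safe_iter_tendsto]])
    then have "\<forall>\<^sub>F n in sequentially. \<forall>a. q_value P r (safe_iter P r c n) s w a < safe_value s w"
      by (rule eventually_all_finite)
    then obtain n where n: "\<forall>a. q_value P r (safe_iter P r c n) s w a < safe_value s w"
      unfolding eventually_sequentially by blast
    have "safe_value s w \<le> safe_iter P r c (Suc n) s w"
      by (rule safe_value_le_iter)
    also have "\<dots> = Max (range (q_value P r (safe_iter P r c n) s w))"
      using True by simp
    also have "\<dots> < safe_value s w"
      using Max_in[of "range (q_value P r (safe_iter P r c n) s w)"] n by auto
    finally show False
      by simp
  qed
qed

definition safe_decision :: "'s \<Rightarrow> real \<Rightarrow> 'a" where
  "safe_decision s w = (SOME a. safe_value s w \<le> q_value P r safe_value s w a)"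

lemma safe_value_le_q_value_decision: "safe_value s w \<le> q_value P r safe_value s w (safe_decision s w)"
  unfolding safe_decision_def using safe_greedy_action_exists by (rule someI_ex)

lemma safe_value_le_prob_wealth_ge_after:
  "safe_value s w \<le> prob_wealth_ge_after P r c (wealth_policy r safe_decision w) s n w"
proof (induction n arbitrary: s w)
  case 0
  show ?case
    using safe_value_le_iter[of s w 0] by (simp add: prob_wealth_ge_after_0)
next
  case (Suc n)
  have "safe_value s w \<le> q_value P r safe_value s w (safe_decision s w)"
    by (rule safe_value_le_q_value_decision)
  also have "\<dots> \<le> prob_wealth_ge_after P r c (wealth_policy r safe_decision w) s (Suc n) w"
    unfolding prob_wealth_ge_after_wealth_policy_Suc using Suc by (rule q_value_mono)
  finally show ?case .
qed

theorem prob_wealth_ge_optimal_of_nonpos: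
  "prob_wealth_ge P r c \<pi> s0 \<le> prob_wealth_ge P r c (wealth_policy r safe_decision 0) s0"
proof -
  have "prob_wealth_ge P r c \<pi> s0 \<le> safe_value s0 0"
    unfolding safe_value_def
    by (rule cINF_greatest)
       (auto intro: order_trans[OF prob_wealth_ge_le_after[OF nonpos] prob_wealth_ge_after_le_safe_iter])
  also have "\<dots> \<le> prob_wealth_ge P r c (wealth_policy r safe_decision 0) s0"
    by (rule LIMSEQ_le_const[OF prob_wealth_ge_after_tendsto_of_nonpos[OF nonpos]])
       (use safe_value_le_prob_wealth_ge_after in auto)
  finally show ?thesis .
qed

end

section \<open>Nonnegative rewards: a reachability problem\<close>

lemma pmf_max_principle:
  fixes g :: "'s::finite \<Rightarrow> real"
  assumes le: "\<And>t. 0 < pmf p t \<Longrightarrow> g t \<le> m" and ge: "m \<le> (\<Sum>t\<in>UNIV. pmf p t * g t)"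
    and t: "0 < pmf p t"
  shows "g t = m"
proof -
  have nonneg: "0 \<le> pmf p t' * (m - g t')" for t'
  proof (cases "0 < pmf p t'")
    case False
    then have "pmf p t' = 0"
      using pmf_nonneg[of p t'] by linarith
    then show ?thesis
      by simp
  qed (use le[of t'] in simp)
  have "(\<Sum>t'\<in>UNIV. pmf p t' * (m - g t')) = m - (\<Sum>t'\<in>UNIV. pmf p t' * g t')"
    by (simp add: right_diff_distrib sum_subtractf sum_distrib_right[symmetric] sum_pmf_UNIV)
  also have "\<dots> \<le> 0"
    using ge by simp
  finally have "(\<Sum>t'\<in>UNIV. pmf p t' * (m - g t')) \<le> 0" .
  moreover have "0 \<le> (\<Sum>t'\<in>UNIV. pmf p t' * (m - g t'))"
    by (rule sum_nonneg) (rule nonneg)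
  ultimately have "(\<Sum>t'\<in>UNIV. pmf p t' * (m - g t')) = 0"
    by linarith
  then have "pmf p t * (m - g t) = 0"
    using nonneg by (simp add: sum_nonneg_eq_0_iff)
  then show ?thesis
    using t by simp
qed

lemma q_value_shift:
  assumes "\<And>s'. 0 < pmf (P s a) s' \<Longrightarrow> f s' (w + r s a) = g s' (w + r s a) - \<epsilon>"
  shows "q_value P r f s w a = q_value P r g s w a - \<epsilon>"
proof -
  have "pmf (P s a) s' * f s' (w + r s a) = pmf (P s a) s' * g s' (w + r s a) - pmf (P s a) s' * \<epsilon>" for s'
  proof (cases "0 < pmf (P s a) s'")
    case False
    then have "pmf (P s a) s' = 0"
      using pmf_nonneg[of "P s a" s'] by linarith
    then show ?thesis
      by simp
  qed (simp add: assms right_diff_distrib)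
  then show ?thesis
    unfolding q_value_def by (simp add: sum_subtractf sum_distrib_right[symmetric] sum_pmf_UNIV)
qed

fun reach_iter :: "('s::finite \<Rightarrow> 'a::finite \<Rightarrow> 's pmf) \<Rightarrow> ('s \<Rightarrow> 'a \<Rightarrow> real) \<Rightarrow> real \<Rightarrow> nat \<Rightarrow> 's \<Rightarrow> real \<Rightarrow> real" where
  "reach_iter P r c 0 s w = (if c \<le> w then 1 else 0)"
| "reach_iter P r c (Suc n) s w = (if c \<le> w then 1 else Max (range (q_value P r (reach_iter P r c n) s w)))"

definition reach_value ::
  "('s::finite \<Rightarrow> 'a::finite \<Rightarrow> 's pmf) \<Rightarrow> ('s \<Rightarrow> 'a \<Rightarrow> real) \<Rightarrow> real \<Rightarrow> 's \<Rightarrow> real \<Rightarrow> real" where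
  "reach_value P r c s w = (SUP n. reach_iter P r c n s w)"

text \<open>Acting greedily with respect to the value is not enough: a greedy action may keep the
  process forever on a level set of the value. The progress sets collect the states from which
  greedy actions reach the target within n steps with positive probability.\<close>

primrec progress_set ::
  "('s::finite \<Rightarrow> 'a::finite \<Rightarrow> 's pmf) \<Rightarrow> ('s \<Rightarrow> 'a \<Rightarrow> real) \<Rightarrow> real \<Rightarrow> nat \<Rightarrow> ('s \<times> real) set" where
  "progress_set P r c 0 = {(s, w). c \<le> w}"
| "progress_set P r c (Suc n) = progress_set P r c n \<union>
     {(s, w). \<exists>a. reach_value P r c s w \<le> q_value P r (reach_value P r c) s w a \<and>
        (\<exists>s'. 0 < pmf (P s a) s' \<and> (s', w + r s a) \<in> progress_set P r c n)}"

context
  fixes P :: "'s::finite \<Rightarrow> 'a::finite \<Rightarrow> 's pmf" and r :: "'s \<Rightarrow> 'a \<Rightarrow> real" and c :: real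
  assumes nonneg: "\<forall>s a. 0 \<le> r s a"
begin

lemma reach_iter_bounds: "0 \<le> reach_iter P r c n s w \<and> reach_iter P r c n s w \<le> 1"
proof (induction n arbitrary: s w)
  case (Suc n)
  then show ?case
    using Max_q_value_bounds[of "reach_iter P r c n" P r s w] by auto
qed simp

lemma reach_iter_le_Suc: "reach_iter P r c n s w \<le> reach_iter P r c (Suc n) s w"
proof (induction n arbitrary: s w)
  case 0
  then show ?case
    using Max_q_value_bounds[of "reach_iter P r c 0" P r s w] reach_iter_bounds by simp
next
  case (Suc n)
  then show ?case
    using Max_q_value_mono[of "reach_iter P r c n" "reach_iter P r c (Suc n)" P r s w] by simp
qed

lemma prob_wealth_ge_after_le_reach_iter: "prob_wealth_ge_after P r c \<pi> s n w \<le> reach_iter P r c n s w"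
proof (induction n arbitrary: \<pi> s w)
  case (Suc n)
  then show ?case
    using prob_wealth_ge_after_Suc_le_Max[OF Suc] by (simp add: prob_wealth_ge_after_le_1)
qed (simp add: prob_wealth_ge_after_0)

lemma bdd_above_reach_iter: "bdd_above (range (\<lambda>n. reach_iter P r c n s w))"
  using reach_iter_bounds by (intro bdd_aboveI[of _ 1]) auto

lemma reach_iter_le_value: "reach_iter P r c n s w \<le> reach_value P r c s w"
  unfolding reach_value_def by (rule cSUP_upper[OF _ bdd_above_reach_iter]) simp

lemma reach_value_le: "(\<And>n. reach_iter P r c n s w \<le> x) \<Longrightarrow> reach_value P r c s w \<le> x"
  unfolding reach_value_def by (rule cSUP_least) auto

lemma reach_iter_tendsto: "(\<lambda>n. reach_iter P r c n s w) \<longlonglongrightarrow> reach_value P r c s w"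
  unfolding reach_value_def
  by (rule LIMSEQ_incseq_SUP[OF bdd_above_reach_iter]) (rule incseq_SucI, rule reach_iter_le_Suc)

lemma reach_value_nonneg: "0 \<le> reach_value P r c s w"
  using reach_iter_le_value[of 0 s w] reach_iter_bounds[of 0 s w] by linarith

lemma reach_value_le_1: "reach_value P r c s w \<le> 1"
  using reach_iter_bounds by (intro reach_value_le) auto

lemma reach_value_target: "c \<le> w \<Longrightarrow> reach_value P r c s w = 1"
  using reach_iter_le_value[of 0 s w] reach_value_le_1[of s w] by simp

lemma q_value_reach_value_le:
  assumes "w < c"
  shows "q_value P r (reach_value P r c) s w a \<le> reach_value P r c s w"
proof -
  have "q_value P r (reach_iter P r c n) s w a \<le> reach_value P r c s w" for n
  proof -
    have "q_value P r (reach_iter P r c n) s w a \<le> Max (range (q_value P r (reach_iter P r c n) s w))"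
      by (rule Max_ge) simp_all
    also have "\<dots> \<le> reach_value P r c s w"
      using reach_iter_le_value[of "Suc n" s w] assms by simp
    finally show ?thesis .
  qed
  then show ?thesis
    by (intro LIMSEQ_le_const2[OF q_value_tendsto[OF reach_iter_tendsto]]) auto
qed

lemma reach_greedy_action_exists: "\<exists>a. reach_value P r c s w \<le> q_value P r (reach_value P r c) s w a"
proof (cases "c \<le> w")
  case True
  then have "q_value P r (reach_value P r c) s w a = 1" for a
    unfolding q_value_def using nonneg
    by (simp add: reach_value_target sum_pmf_UNIV add_increasing2)
  then show ?thesis
    using reach_value_le_1 by metis
next
  case False
  have "reach_value P r c s w \<le> Max (range (q_value P r (reach_value P r c) s w))"
  proof (rule reach_value_le)
    fix n
    show "reach_iter P r c n s w \<le> Max (range (q_value P r (reach_value P r c) s w))"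
      using False Max_q_value_bounds[of "reach_value P r c" P r s w] reach_value_nonneg reach_value_le_1
        Max_q_value_mono[of "reach_iter P r c _" "reach_value P r c" P r s w] reach_iter_le_value
      by (cases n) auto
  qed
  moreover have "Max (range (q_value P r (reach_value P r c) s w)) \<in> range (q_value P r (reach_value P r c) s w)"
    by (rule Max_in) simp_all
  then obtain a where "Max (range (q_value P r (reach_value P r c) s w)) = q_value P r (reach_value P r c) s w a"
    by (rule rangeE)
  ultimately show ?thesis
    by metis
qed

lemma reach_value_le_super_solution:
  assumes f0: "\<And>s w. 0 \<le> f s w"
    and target: "\<And>s w. c \<le> w \<Longrightarrow> 1 \<le> f s w"
    and super: "\<And>s w a. w < c \<Longrightarrow> q_value P r f s w a \<le> f s w"
  shows "reach_value P r c s w \<le> f s w"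
proof (rule reach_value_le)
  fix n
  show "reach_iter P r c n s w \<le> f s w"
  proof (induction n arbitrary: s w)
    case (Suc n)
    have "Max (range (q_value P r (reach_iter P r c n) s w)) \<le> f s w" if "w < c"
    proof -
      have "Max (range (q_value P r (reach_iter P r c n) s w)) \<le> Max (range (q_value P r f s w))"
        by (rule Max_q_value_mono) (rule Suc)
      also have "\<dots> \<le> f s w"
        using super[OF that] by (intro Max.boundedI) auto
      finally show ?thesis .
    qed
    then show ?case
      using target by (cases "c \<le> w") auto
  qed (use f0 target in simp)
qed

definition transient_states :: "('s \<times> real) set" where
  "transient_states = UNIV \<times> (wealth_levels r \<inter> {w. 0 \<le> w \<and> w < c})"

lemma finite_transient_states: "finite transient_states"
proof -
  have "constant_sign r"
    using nonneg by (simp add: constant_sign_def)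
  then have "finite (wealth_levels r \<inter> {0..c})"
    by (rule finite_wealth_levels_Icc)
  then have "finite (wealth_levels r \<inter> {w. 0 \<le> w \<and> w < c})"
    by (rule finite_subset[rotated]) auto
  then show ?thesis
    unfolding transient_states_def by simp
qed

lemma transient_states_step:
  assumes "(s, w) \<in> transient_states" "w + r s a < c"
  shows "(s', w + r s a) \<in> transient_states"
proof -
  obtain h where h: "w = hist_wealth r h" "0 \<le> w"
    using assms(1) unfolding transient_states_def wealth_levels_def by auto
  then have "w + r s a \<in> wealth_levels r"
    unfolding wealth_levels_def by (intro range_eqI[of _ _ "h @ [(s, a)]"]) simp
  then show ?thesis
    using assms(2) h nonneg unfolding transient_states_def by (auto intro: add_nonneg_nonneg)
qed

lemma transient_states_below: "(s, w) \<in> transient_states \<Longrightarrow> w < c"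
  unfolding transient_states_def by auto

text \<open>Lowering the value by \<epsilon> on a set of transient states that greedy actions cannot leave
  would give a smaller super-solution, unless \<epsilon> exceeds the value or the loss of some
  non-greedy action there.\<close>

lemma greedy_closed_lowering_nonpos:
  assumes Y: "Y \<subseteq> transient_states"
    and closed: "\<And>s w a s'. (s, w) \<in> Y \<Longrightarrow>
      reach_value P r c s w \<le> q_value P r (reach_value P r c) s w a \<Longrightarrow>
      0 < pmf (P s a) s' \<Longrightarrow> (s', w + r s a) \<in> Y"
    and \<epsilon>_le_value: "\<And>s w. (s, w) \<in> Y \<Longrightarrow> \<epsilon> \<le> reach_value P r c s w"
    and \<epsilon>_le_loss: "\<And>s w a. (s, w) \<in> Y \<Longrightarrow> q_value P r (reach_value P r c) s w a < reach_value P r c s w \<Longrightarrow>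
      \<epsilon> \<le> reach_value P r c s w - q_value P r (reach_value P r c) s w a"
    and "(s, w) \<in> Y"
  shows "\<epsilon> \<le> 0"
proof (rule ccontr)
  assume "\<not> \<epsilon> \<le> 0"
  let ?V = "reach_value P r c"
  define f where "f = (\<lambda>s w. ?V s w - (if (s, w) \<in> Y then \<epsilon> else 0))"
  have "?V s w \<le> f s w"
  proof (rule reach_value_le_super_solution)
    show "0 \<le> f s w" for s w
      unfolding f_def using reach_value_nonneg \<epsilon>_le_value by auto
    show "1 \<le> f s w" if "c \<le> w" for s w
      using that Y transient_states_below[of s w] reach_value_target[OF that]
      unfolding f_def by auto
  next
    fix s w a assume "w < c"
    have "q_value P r f s w a \<le> q_value P r ?V s w a"
      unfolding f_def using \<open>\<not> \<epsilon> \<le> 0\<close> by (intro q_value_mono) simp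
    moreover have "q_value P r f s w a = q_value P r ?V s w a - \<epsilon>"
      if "(s, w) \<in> Y" "?V s w \<le> q_value P r ?V s w a"
      using closed[OF that] unfolding f_def by (intro q_value_shift) auto
    ultimately show "q_value P r f s w a \<le> f s w"
      using q_value_reach_value_le[OF \<open>w < c\<close>, of s a] \<epsilon>_le_loss[of s w a]
      unfolding f_def by (cases "(s, w) \<in> Y"; cases "?V s w \<le> q_value P r ?V s w a") auto
  qed
  then show False
    using \<open>(s, w) \<in> Y\<close> \<open>\<not> \<epsilon> \<le> 0\<close> unfolding f_def by simp
qed

lemma greedy_closed_transient_set_empty:
  assumes Y: "Y \<subseteq> transient_states"
    and pos: "\<And>s w. (s, w) \<in> Y \<Longrightarrow> 0 < reach_value P r c s w"
    and closed: "\<And>s w a s'. (s, w) \<in> Y \<Longrightarrow>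
      reach_value P r c s w \<le> q_value P r (reach_value P r c) s w a \<Longrightarrow>
      0 < pmf (P s a) s' \<Longrightarrow> (s', w + r s a) \<in> Y"
  shows "Y = {}"
proof (rule ccontr)
  assume "Y \<noteq> {}"
  let ?V = "reach_value P r c"
  let ?losses = "(\<lambda>((s, w), a). ?V s w - q_value P r ?V s w a) `
    {((s, w), a). (s, w) \<in> Y \<and> q_value P r ?V s w a < ?V s w}"
  define \<epsilon> where "\<epsilon> = Min ((\<lambda>(s, w). ?V s w) ` Y \<union> ?losses)"
  have "finite Y"
    using Y finite_transient_states by (rule finite_subset)
  then have "finite (Y \<times> (UNIV :: 'a set))"
    by simp
  then have "finite {((s, w), a). (s, w) \<in> Y \<and> q_value P r ?V s w a < ?V s w}"
    by (rule finite_subset[rotated]) auto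
  then have fin: "finite ((\<lambda>(s, w). ?V s w) ` Y \<union> ?losses)"
    using \<open>finite Y\<close> by simp
  obtain s w where "(s, w) \<in> Y"
    using \<open>Y \<noteq> {}\<close> by auto
  have "\<epsilon> \<le> 0"
  proof (rule greedy_closed_lowering_nonpos[OF Y closed _ _ \<open>(s, w) \<in> Y\<close>])
    show "\<epsilon> \<le> ?V s w" if "(s, w) \<in> Y" for s w
      unfolding \<epsilon>_def using fin that by (intro Min_le) auto
    show "\<epsilon> \<le> ?V s w - q_value P r ?V s w a" if "(s, w) \<in> Y" "q_value P r ?V s w a < ?V s w" for s w a
      unfolding \<epsilon>_def using fin that by (intro Min_le) (auto intro!: image_eqI[of _ _ "((s, w), a)"])
  qed (simp_all add: closed)
  moreover have "0 < \<epsilon>"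
    unfolding \<epsilon>_def using fin \<open>Y \<noteq> {}\<close> pos by (subst Min_gr_iff) auto
  ultimately show False
    by simp
qed

lemma unranked_greedy_successor:
  assumes "\<forall>n. (s, w) \<notin> progress_set P r c n"
    and "reach_value P r c s w \<le> q_value P r (reach_value P r c) s w a" "0 < pmf (P s a) t"
  shows "(\<forall>n. (t, w + r s a) \<notin> progress_set P r c n) \<and> w + r s a < c"
proof -
  have "(t, w + r s a) \<notin> progress_set P r c n" for n
    using assms(1)[rule_format, of "Suc n"] assms(2,3) by auto
  moreover from this[of 0] have "w + r s a < c"
    by auto
  ultimately show ?thesis
    by blast
qed

lemma positive_reach_value_progress:
  assumes "(s, w) \<in> transient_states" "0 < reach_value P r c s w"
  shows "\<exists>n. (s, w) \<in> progress_set P r c n"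
proof (rule ccontr)
  assume unranked: "\<not> ?thesis"
  let ?V = "reach_value P r c"
  define Z where "Z = {(s, w) \<in> transient_states. 0 < ?V s w \<and> (\<forall>n. (s, w) \<notin> progress_set P r c n)}"
  define m where "m = Max ((\<lambda>(s, w). ?V s w) ` Z)"
  define Y where "Y = {(s, w) \<in> Z. ?V s w = m}"
  have "finite Z"
    using finite_transient_states unfolding Z_def by (rule finite_subset[rotated]) auto
  have "(s, w) \<in> Z"
    using assms unranked unfolding Z_def by auto
  then have "m \<in> (\<lambda>(s, w). ?V s w) ` Z"
    unfolding m_def using \<open>finite Z\<close> by (intro Max_in) auto
  then have "Y \<noteq> {}"
    unfolding Y_def by auto
  have le_m: "?V s w \<le> m" if "(s, w) \<in> Z" for s w
    unfolding m_def using \<open>finite Z\<close> that by (auto intro!: Max_ge)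
  have "Y = {}"
  proof (rule greedy_closed_transient_set_empty)
    show "Y \<subseteq> transient_states" "\<And>s w. (s, w) \<in> Y \<Longrightarrow> 0 < ?V s w"
      unfolding Y_def Z_def by auto
  next
    fix s w a s'
    assume sw: "(s, w) \<in> Y" and greedy: "?V s w \<le> q_value P r ?V s w a" and s': "0 < pmf (P s a) s'"
    have "0 < m"
      using sw unfolding Y_def Z_def by auto
    have succ_Z: "(t, w + r s a) \<in> Z" if "0 < pmf (P s a) t" "0 < ?V t (w + r s a)" for t
      using unranked_greedy_successor[OF _ greedy that(1)] sw that(2) transient_states_step
      unfolding Y_def Z_def by auto
    have "?V s' (w + r s a) = m"
    proof (rule pmf_max_principle[OF _ _ s'])
      show "?V t (w + r s a) \<le> m" if "0 < pmf (P s a) t" for t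
        using le_m succ_Z[OF that] \<open>0 < m\<close> by (cases "0 < ?V t (w + r s a)") auto
      show "m \<le> (\<Sum>t\<in>UNIV. pmf (P s a) t * ?V t (w + r s a))"
        using greedy sw unfolding Y_def q_value_def by auto
    qed
    then show "(s', w + r s a) \<in> Y"
      using succ_Z[OF s'] \<open>0 < m\<close> unfolding Y_def by auto
  qed
  with \<open>Y \<noteq> {}\<close> show False
    by simp
qed

definition progress_rank :: "'s \<times> real \<Rightarrow> nat" where
  "progress_rank x = (LEAST n. x \<in> progress_set P r c n)"

definition reach_decision :: "'s \<Rightarrow> real \<Rightarrow> 'a" where
  "reach_decision s w =
     (if (\<exists>n. (s, w) \<in> progress_set P r c n) \<and> w < c then
        SOME a. reach_value P r c s w \<le> q_value P r (reach_value P r c) s w a \<and>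
          (\<exists>s'. 0 < pmf (P s a) s' \<and> (s', w + r s a) \<in> progress_set P r c (progress_rank (s, w) - 1))
      else SOME a. reach_value P r c s w \<le> q_value P r (reach_value P r c) s w a)"

lemma reach_decision_progress:
  assumes "(s, w) \<in> progress_set P r c n" "w < c"
  shows "reach_value P r c s w \<le> q_value P r (reach_value P r c) s w (reach_decision s w)"
    and "\<exists>s'. 0 < pmf (P s (reach_decision s w)) s' \<and>
      (s', w + r s (reach_decision s w)) \<in> progress_set P r c (progress_rank (s, w) - 1)"
    and "0 < progress_rank (s, w)"
proof -
  let ?k = "progress_rank (s, w)"
  have k: "(s, w) \<in> progress_set P r c ?k"
    unfolding progress_rank_def using assms(1) by (rule LeastI)
  then have "?k \<noteq> 0"
    using assms(2) by (intro notI) auto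
  then obtain j where j: "?k = Suc j"
    by (cases ?k) auto
  moreover have "(s, w) \<notin> progress_set P r c j"
    using j not_less_Least[of j "\<lambda>n. (s, w) \<in> progress_set P r c n"] unfolding progress_rank_def by auto
  ultimately have "(s, w) \<in> progress_set P r c (Suc j) - progress_set P r c j"
    using k by simp
  let ?progress = "\<lambda>a. reach_value P r c s w \<le> q_value P r (reach_value P r c) s w a \<and>
      (\<exists>s'. 0 < pmf (P s a) s' \<and> (s', w + r s a) \<in> progress_set P r c (?k - 1))"
  have "\<exists>a. ?progress a"
    using \<open>(s, w) \<in> progress_set P r c (Suc j) - progress_set P r c j\<close> j by auto
  then have "?progress (SOME a. ?progress a)"
    by (rule someI_ex)
  moreover have "reach_decision s w = (SOME a. ?progress a)"
    unfolding reach_decision_def using assms by (subst if_P) auto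
  ultimately show "reach_value P r c s w \<le> q_value P r (reach_value P r c) s w (reach_decision s w)"
    and "\<exists>s'. 0 < pmf (P s (reach_decision s w)) s' \<and>
      (s', w + r s (reach_decision s w)) \<in> progress_set P r c (?k - 1)"
    by simp_all
  show "0 < ?k"
    using \<open>?k \<noteq> 0\<close> by simp
qed

lemma reach_value_le_q_value_decision:
  "reach_value P r c s w \<le> q_value P r (reach_value P r c) s w (reach_decision s w)"
proof (cases "(\<exists>n. (s, w) \<in> progress_set P r c n) \<and> w < c")
  case True
  then show ?thesis
    using reach_decision_progress(1) by blast
next
  case False
  then have "reach_decision s w = (SOME a. reach_value P r c s w \<le> q_value P r (reach_value P r c) s w a)"
    unfolding reach_decision_def by (subst if_not_P) auto
  then show ?thesis
    using someI_ex[OF reach_greedy_action_exists[of s w]] by simp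
qed

definition decision_value :: "'s \<Rightarrow> real \<Rightarrow> real" where
  "decision_value s w = (SUP n. prob_wealth_ge_after P r c (wealth_policy r reach_decision w) s n w)"

lemma prob_wealth_ge_after_tendsto_decision_value:
  "(\<lambda>n. prob_wealth_ge_after P r c (wealth_policy r reach_decision w) s n w) \<longlonglongrightarrow> decision_value s w"
  unfolding decision_value_def
  by (rule LIMSEQ_incseq_SUP)
     (auto intro!: bdd_aboveI[of _ 1] incseq_SucI prob_wealth_ge_after_mono_of_nonneg[OF nonneg]
       simp: prob_wealth_ge_after_le_1)

lemma decision_value_nonneg: "0 \<le> decision_value s w"
  by (rule LIMSEQ_le_const[OF prob_wealth_ge_after_tendsto_decision_value])
     (auto simp: prob_wealth_ge_after_nonneg)

lemma decision_value_le_reach_value: "decision_value s w \<le> reach_value P r c s w"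
  unfolding decision_value_def
  by (rule cSUP_least) (auto intro: order_trans[OF prob_wealth_ge_after_le_reach_iter reach_iter_le_value])

lemma decision_value_target: "c \<le> w \<Longrightarrow> decision_value s w = 1"
  unfolding decision_value_def using hist_wealth_nonneg[OF nonneg]
  by (subst prob_wealth_ge_after_eq_1) (auto intro: order_trans)

lemma decision_value_fixpoint:
  "decision_value s w = q_value P r decision_value s w (reach_decision s w)"
proof -
  have "(\<lambda>n. prob_wealth_ge_after P r c (wealth_policy r reach_decision w) s (Suc n) w)
      \<longlonglongrightarrow> q_value P r decision_value s w (reach_decision s w)"
    unfolding prob_wealth_ge_after_wealth_policy_Suc
    by (rule q_value_tendsto) (rule prob_wealth_ge_after_tendsto_decision_value)
  then show ?thesis
    using LIMSEQ_unique LIMSEQ_Suc[OF prob_wealth_ge_after_tendsto_decision_value] by blast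
qed

lemma max_deficit_successor:
  assumes le_m: "\<And>s w. (s, w) \<in> transient_states \<Longrightarrow> reach_value P r c s w - decision_value s w \<le> m"
    and "0 < m" and sw: "(s, w) \<in> transient_states" "reach_value P r c s w - decision_value s w = m"
    and s': "0 < pmf (P s (reach_decision s w)) s'"
  defines "w' \<equiv> w + r s (reach_decision s w)"
  shows "(s', w') \<in> transient_states \<and> reach_value P r c s' w' - decision_value s' w' = m"
proof -
  let ?a = "reach_decision s w"
  let ?deficit = "\<lambda>t. reach_value P r c t w' - decision_value t w'"
  have deficit_le: "?deficit t \<le> m" for t
  proof (cases "c \<le> w'")
    case True
    then show ?thesis
      using \<open>0 < m\<close> by (simp add: reach_value_target decision_value_target)
  next
    case False
    then show ?thesis
      using le_m transient_states_step[OF sw(1)] unfolding w'_def by simp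
  qed
  have "m \<le> (\<Sum>t\<in>UNIV. pmf (P s ?a) t * ?deficit t)"
    using sw(2) reach_value_le_q_value_decision[of s w] decision_value_fixpoint[of s w]
    by (simp add: q_value_def w'_def right_diff_distrib sum_subtractf)
  then have "?deficit s' = m"
    using deficit_le s' by (intro pmf_max_principle) auto
  moreover have "w' < c"
  proof (rule ccontr)
    assume "\<not> w' < c"
    then show False
      using \<open>?deficit s' = m\<close> \<open>0 < m\<close> by (simp add: reach_value_target decision_value_target)
  qed
  ultimately show ?thesis
    using transient_states_step[OF sw(1)] unfolding w'_def by simp
qed

lemma decision_value_eq_reach_value:
  assumes "(s, w) \<in> transient_states"
  shows "decision_value s w = reach_value P r c s w"
proof (rule ccontr)
  assume ne: "decision_value s w \<noteq> reach_value P r c s w"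
  let ?deficit = "\<lambda>(s, w). reach_value P r c s w - decision_value s w"
  define m where "m = Max (?deficit ` transient_states)"
  define M where "M = {x \<in> transient_states. ?deficit x = m}"
  have le_m: "?deficit x \<le> m" if "x \<in> transient_states" for x
    unfolding m_def using finite_transient_states that by (intro Max_ge) auto
  have "0 < m"
    using le_m[OF assms] ne decision_value_le_reach_value[of s w] by simp
  have "m \<in> ?deficit ` transient_states"
    unfolding m_def using finite_transient_states assms by (intro Max_in) auto
  then obtain x0 where "x0 \<in> M"
    unfolding M_def by auto
  then obtain x where x: "x \<in> M" and x_min: "\<And>y. y \<in> M \<Longrightarrow> progress_rank x \<le> progress_rank y"
    using ex_has_least_nat[of "\<lambda>x. x \<in> M" x0 progress_rank] by blast
  obtain s1 w1 where x_eq: "x = (s1, w1)"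
    by fastforce
  have trans: "(s1, w1) \<in> transient_states" and deficit: "reach_value P r c s1 w1 - decision_value s1 w1 = m"
    using x unfolding M_def x_eq by auto
  then have "0 < reach_value P r c s1 w1"
    using \<open>0 < m\<close> decision_value_nonneg[of s1 w1] by linarith
  then obtain n where "(s1, w1) \<in> progress_set P r c n"
    using positive_reach_value_progress trans by blast
  then obtain s' where s': "0 < pmf (P s1 (reach_decision s1 w1)) s'"
    and progress: "(s', w1 + r s1 (reach_decision s1 w1)) \<in> progress_set P r c (progress_rank x - 1)"
    and "0 < progress_rank x"
    using reach_decision_progress[OF _ transient_states_below[OF trans]] unfolding x_eq by blast
  have "(s', w1 + r s1 (reach_decision s1 w1)) \<in> M"
    using max_deficit_successor[OF _ \<open>0 < m\<close> trans deficit s'] le_m unfolding M_def by auto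
  then have "progress_rank x \<le> progress_rank (s', w1 + r s1 (reach_decision s1 w1))"
    by (rule x_min)
  also have "\<dots> \<le> progress_rank x - 1"
    unfolding progress_rank_def[of "(s', _)"] by (rule Least_le) (rule progress)
  finally show False
    using \<open>0 < progress_rank x\<close> by simp
qed

theorem prob_wealth_ge_optimal_of_nonneg:
  "prob_wealth_ge P r c \<pi> s0 \<le> prob_wealth_ge P r c (wealth_policy r reach_decision 0) s0"
proof -
  have "prob_wealth_ge P r c \<pi> s0 \<le> reach_value P r c s0 0"
    by (rule LIMSEQ_le_const2[OF prob_wealth_ge_after_tendsto_of_nonneg[OF nonneg]])
       (meson prob_wealth_ge_after_le_reach_iter reach_iter_le_value order_trans)
  also have "\<dots> = decision_value s0 0"
  proof (cases "c \<le> 0")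
    case True
    then show ?thesis
      by (simp add: reach_value_target decision_value_target)
  next
    case False
    then have "(s0, 0) \<in> transient_states"
      unfolding transient_states_def wealth_levels_def by (auto intro: image_eqI[of _ _ "[]"])
    then show ?thesis
      by (simp add: decision_value_eq_reach_value)
  qed
  also have "\<dots> = prob_wealth_ge P r c (wealth_policy r reach_decision 0) s0"
    using LIMSEQ_unique[OF prob_wealth_ge_after_tendsto_decision_value prob_wealth_ge_after_tendsto_of_nonneg[OF nonneg]]
    by simp
  finally show ?thesis .
qed

end

section \<open>Quantiles of a variable with locally finite values\<close>

lemma locally_finite_gap_above:
  fixes x :: real
  assumes "finite (D \<inter> {x..x + 1})"
  shows "\<exists>y>x. \<forall>d\<in>D. \<not> (x < d \<and> d < y)"
proof -
  define B where "B = {d \<in> D \<inter> {x..x + 1}. x < d}"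
  have "finite B"
    using assms unfolding B_def by (rule finite_subset[rotated]) auto
  define y where "y = (if B = {} then x + 1 else Min B)"
  have "\<not> (x < d \<and> d < y)" if "d \<in> D" for d
  proof
    assume d: "x < d \<and> d < y"
    have "y \<le> x + 1"
      unfolding y_def using \<open>finite B\<close> by (auto simp: B_def intro: order_trans[OF Min_le])
    then have "d \<in> B"
      using d that unfolding B_def by auto
    then have "y \<le> d"
      using \<open>finite B\<close> unfolding y_def by auto
    then show False
      using d by simp
  qed
  moreover have "x < y"
    unfolding y_def using \<open>finite B\<close> by (auto simp: B_def)
  ultimately show ?thesis
    by blast
qed

lemma locally_finite_gap_below:
  fixes x :: real
  assumes "finite (D \<inter> {x - 1..x})"
  shows "\<exists>y<x. \<forall>d\<in>D. \<not> (y < d \<and> d < x)"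
proof -
  define B where "B = {d \<in> D \<inter> {x - 1..x}. d < x}"
  have "finite B"
    using assms unfolding B_def by (rule finite_subset[rotated]) auto
  define y where "y = (if B = {} then x - 1 else Max B)"
  have "\<not> (y < d \<and> d < x)" if "d \<in> D" for d
  proof
    assume d: "y < d \<and> d < x"
    have "x - 1 \<le> y"
      unfolding y_def using \<open>finite B\<close> by (auto simp: B_def intro: order_trans[OF _ Max_ge])
    then have "d \<in> B"
      using d that unfolding B_def by auto
    then have "d \<le> y"
      using \<open>finite B\<close> unfolding y_def by auto
    then show False
      using d by simp
  qed
  moreover have "y < x"
    unfolding y_def using \<open>finite B\<close> by (auto simp: B_def)
  ultimately show ?thesis
    by blast
qed

locale locally_finite_valued = prob_space M
  for M :: "'w measure" +
  fixes X :: "'w \<Rightarrow> ereal" and D :: "real set"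
  assumes measurable_X [measurable]: "X \<in> borel_measurable M"
    and X_values: "\<And>\<omega>. \<omega> \<in> space M \<Longrightarrow> X \<omega> = -\<infinity> \<or> X \<omega> = \<infinity> \<or> (\<exists>d\<in>D. X \<omega> = ereal d)"
    and finite_D_Icc: "\<And>a b. finite (D \<inter> {a..b})"
begin

definition prob_le :: "ereal \<Rightarrow> real" where
  "prob_le w = measure M {\<omega> \<in> space M. X \<omega> \<le> w}"

definition prob_ge :: "ereal \<Rightarrow> real" where
  "prob_ge w = measure M {\<omega> \<in> space M. w \<le> X \<omega>}"

lemma events_X_le [simp]: "{\<omega> \<in> space M. X \<omega> \<le> w} \<in> events"
  by measurable

lemma events_X_ge [simp]: "{\<omega> \<in> space M. w \<le> X \<omega>} \<in> events"
  by measurable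

lemma prob_le_mono: "v \<le> w \<Longrightarrow> prob_le v \<le> prob_le w"
  unfolding prob_le_def by (intro finite_measure_mono) (auto intro: order_trans)

lemma prob_ge_antimono: "v \<le> w \<Longrightarrow> prob_ge w \<le> prob_ge v"
  unfolding prob_ge_def by (intro finite_measure_mono) (auto intro: order_trans)

lemma prob_le_PInf: "prob_le \<infinity> = 1"
  unfolding prob_le_def by (simp add: prob_space)

lemma prob_ge_MInf: "prob_ge (-\<infinity>) = 1"
  unfolding prob_ge_def by (simp add: prob_space)

lemma prob_le_gap:
  assumes "x \<le> z" "\<forall>d\<in>D. \<not> (x < d \<and> d \<le> z)"
  shows "prob_le (ereal x) = prob_le (ereal z)"
proof -
  have "{\<omega> \<in> space M. X \<omega> \<le> ereal x} = {\<omega> \<in> space M. X \<omega> \<le> ereal z}"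
  proof (intro set_eqI iffI)
    fix \<omega> assume "\<omega> \<in> {\<omega> \<in> space M. X \<omega> \<le> ereal z}"
    then show "\<omega> \<in> {\<omega> \<in> space M. X \<omega> \<le> ereal x}"
      using X_values[of \<omega>] assms(2) by (auto simp: not_le)
  qed (use assms(1) in \<open>auto intro: order_trans\<close>)
  then show ?thesis
    unfolding prob_le_def by simp
qed

lemma prob_ge_gap:
  assumes "z \<le> x" "\<forall>d\<in>D. \<not> (z \<le> d \<and> d < x)"
  shows "prob_ge (ereal x) = prob_ge (ereal z)"
proof -
  have "{\<omega> \<in> space M. ereal x \<le> X \<omega>} = {\<omega> \<in> space M. ereal z \<le> X \<omega>}"
  proof (intro set_eqI iffI)
    fix \<omega> assume "\<omega> \<in> {\<omega> \<in> space M. ereal z \<le> X \<omega>}"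
    then show "\<omega> \<in> {\<omega> \<in> space M. ereal x \<le> X \<omega>}"
      using X_values[of \<omega>] assms(2) by (auto simp: not_le)
  next
    fix \<omega> assume "\<omega> \<in> {\<omega> \<in> space M. ereal x \<le> X \<omega>}"
    then show "\<omega> \<in> {\<omega> \<in> space M. ereal z \<le> X \<omega>}"
      using assms(1) order_trans[of "ereal z" "ereal x" "X \<omega>"] by simp
  qed
  then show ?thesis
    unfolding prob_ge_def by simp
qed

lemma prob_le_MInf_ge:
  assumes "\<And>n::nat. \<tau> \<le> prob_le (ereal (- real n))"
  shows "\<tau> \<le> prob_le (-\<infinity>)"
proof -
  let ?A = "\<lambda>n::nat. {\<omega> \<in> space M. X \<omega> \<le> ereal (- real n)}"
  have "decseq ?A"
    by (rule decseq_SucI) (auto intro: order_trans)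
  with events_X_le have "range ?A \<subseteq> events" "decseq ?A"
    by auto
  then have lim: "(\<lambda>n. measure M (?A n)) \<longlonglongrightarrow> measure M (\<Inter>n. ?A n)"
    by (rule finite_Lim_measure_decseq)
  have "(\<Inter>n. ?A n) = {\<omega> \<in> space M. X \<omega> \<le> -\<infinity>}"
  proof (intro set_eqI iffI)
    fix \<omega> assume \<omega>: "\<omega> \<in> (\<Inter>n. ?A n)"
    have "X \<omega> = -\<infinity>"
    proof (cases "X \<omega>")
      case (real v)
      obtain n :: nat where "- v < real n"
        using reals_Archimedean2 by blast
      moreover have "v \<le> - real n"
        using \<omega> real by auto
      ultimately show ?thesis
        by linarith
    qed (use \<omega> in auto)
    with \<omega> show "\<omega> \<in> {\<omega> \<in> space M. X \<omega> \<le> -\<infinity>}"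
      by simp
  qed auto
  with lim show ?thesis
    unfolding prob_le_def by (intro LIMSEQ_le_const[of _ _ \<tau>]) (use assms in \<open>auto simp: prob_le_def\<close>)
qed

lemma prob_ge_PInf_ge:
  assumes "\<And>n::nat. \<tau> \<le> prob_ge (ereal (real n))"
  shows "\<tau> \<le> prob_ge \<infinity>"
proof -
  let ?A = "\<lambda>n::nat. {\<omega> \<in> space M. ereal (real n) \<le> X \<omega>}"
  have "?A (Suc n) \<subseteq> ?A n" for n
  proof
    fix \<omega> assume \<omega>: "\<omega> \<in> ?A (Suc n)"
    have "ereal (real n) \<le> ereal (real (Suc n))"
      by simp
    also have "\<dots> \<le> X \<omega>"
      using \<omega> by simp
    finally show "\<omega> \<in> ?A n"
      using \<omega> by simp
  qed
  then have "decseq ?A"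
    by (rule decseq_SucI)
  with events_X_ge have "range ?A \<subseteq> events" "decseq ?A"
    by auto
  then have lim: "(\<lambda>n. measure M (?A n)) \<longlonglongrightarrow> measure M (\<Inter>n. ?A n)"
    by (rule finite_Lim_measure_decseq)
  have "(\<Inter>n. ?A n) = {\<omega> \<in> space M. \<infinity> \<le> X \<omega>}"
  proof (intro set_eqI iffI)
    fix \<omega> assume \<omega>: "\<omega> \<in> (\<Inter>n. ?A n)"
    have "X \<omega> = \<infinity>"
    proof (cases "X \<omega>")
      case (real v)
      obtain n :: nat where "v < real n"
        using reals_Archimedean2 by blast
      moreover have "real n \<le> v"
        using \<omega> real by auto
      ultimately show ?thesis
        by linarith
    qed (use \<omega> in auto)
    with \<omega> show "\<omega> \<in> {\<omega> \<in> space M. \<infinity> \<le> X \<omega>}"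
      by simp
  qed auto
  with lim show ?thesis
    unfolding prob_ge_def by (intro LIMSEQ_le_const[of _ _ \<tau>]) (use assms in \<open>auto simp: prob_ge_def\<close>)
qed

text \<open>Local finiteness of the values makes the distribution functions locally constant to the
  right of every point, so the infimum defining the lower quantile is attained.\<close>

lemma prob_le_Inf_ge:
  assumes "\<tau> \<le> 1"
  shows "\<tau> \<le> prob_le (Inf {w. \<tau> \<le> prob_le w})"
proof (cases "Inf {w. \<tau> \<le> prob_le w}")
  case (real x)
  obtain y where "x < y" and gap: "\<forall>d\<in>D. \<not> (x < d \<and> d < y)"
    using locally_finite_gap_above[OF finite_D_Icc] by blast
  then have "Inf {w. \<tau> \<le> prob_le w} < ereal y"
    using real by simp
  then obtain z where z: "\<tau> \<le> prob_le z" "z < ereal y"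
    by (auto simp: Inf_less_iff)
  have "ereal x \<le> z"
    using z real by (metis Inf_lower mem_Collect_eq)
  with z obtain v where v: "z = ereal v" "x \<le> v" "v < y"
    by (cases z) auto
  then have "prob_le (ereal x) = prob_le (ereal v)"
    using gap by (intro prob_le_gap) auto
  then have "prob_le (ereal x) = prob_le z"
    using v by simp
  then show ?thesis
    using z real by simp
next
  case PInf
  then show ?thesis
    using assms by (simp add: prob_le_PInf)
next
  case MInf
  have "\<tau> \<le> prob_le (ereal (- real n))" for n
  proof -
    have "Inf {w. \<tau> \<le> prob_le w} < ereal (- real n)"
      using MInf by simp
    then obtain z where "\<tau> \<le> prob_le z" "z < ereal (- real n)"
      by (auto simp: Inf_less_iff)
    then show ?thesis
      by (meson less_imp_le order_trans prob_le_mono)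
  qed
  then show ?thesis
    using prob_le_MInf_ge MInf by simp
qed

lemma prob_ge_Sup_ge:
  assumes "0 \<le> \<tau>"
  shows "1 - \<tau> \<le> prob_ge (Sup {w. 1 - \<tau> \<le> prob_ge w})"
proof (cases "Sup {w. 1 - \<tau> \<le> prob_ge w}")
  case (real x)
  obtain y where "y < x" and gap: "\<forall>d\<in>D. \<not> (y < d \<and> d < x)"
    using locally_finite_gap_below[OF finite_D_Icc] by blast
  then have "ereal y < Sup {w. 1 - \<tau> \<le> prob_ge w}"
    using real by simp
  then obtain z where z: "1 - \<tau> \<le> prob_ge z" "ereal y < z"
    by (auto simp: less_Sup_iff)
  have "z \<le> ereal x"
    using z real by (metis Sup_upper mem_Collect_eq)
  with z obtain v where v: "z = ereal v" "v \<le> x" "y < v"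
    by (cases z) auto
  then have "prob_ge (ereal x) = prob_ge (ereal v)"
    using gap by (intro prob_ge_gap) auto
  then have "prob_ge (ereal x) = prob_ge z"
    using v by simp
  then show ?thesis
    using z real by simp
next
  case MInf
  then show ?thesis
    using assms by (simp add: prob_ge_MInf)
next
  case PInf
  have "1 - \<tau> \<le> prob_ge (ereal (real n))" for n
  proof -
    have "ereal (real n) < Sup {w. 1 - \<tau> \<le> prob_ge w}"
      using PInf by simp
    then obtain z where "1 - \<tau> \<le> prob_ge z" "ereal (real n) < z"
      by (auto simp: less_Sup_iff)
    then show ?thesis
      by (meson less_imp_le order_trans prob_ge_antimono)
  qed
  then show ?thesis
    using prob_ge_PInf_ge PInf by simp
qed

lemma Least_prob_le_eq_Inf:
  assumes "\<tau> \<le> 1"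
  shows "(LEAST w. \<tau> \<le> prob_le w) = Inf {w. \<tau> \<le> prob_le w}"
  by (rule Least_equality) (use prob_le_Inf_ge[OF assms] in \<open>auto intro: Inf_lower\<close>)

lemma Greatest_prob_ge_eq_Sup:
  assumes "0 \<le> \<tau>"
  shows "(GREATEST w. 1 - \<tau> \<le> prob_ge w) = Sup {w. 1 - \<tau> \<le> prob_ge w}"
  by (rule Greatest_equality) (use prob_ge_Sup_ge[OF assms] in \<open>auto intro: Sup_upper\<close>)

lemma prob_le_eq_1_minus_prob_ge:
  assumes "y < c" "\<forall>d\<in>D. \<not> (y < d \<and> d < c)"
  shows "prob_le (ereal y) = 1 - prob_ge (ereal c)"
proof -
  have "{\<omega> \<in> space M. X \<omega> \<le> ereal y} = space M - {\<omega> \<in> space M. ereal c \<le> X \<omega>}"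
  proof (intro set_eqI iffI)
    fix \<omega> assume "\<omega> \<in> space M - {\<omega> \<in> space M. ereal c \<le> X \<omega>}"
    then show "\<omega> \<in> {\<omega> \<in> space M. X \<omega> \<le> ereal y}"
      using X_values[of \<omega>] assms(2) by (auto simp: not_le)
  next
    fix \<omega> assume "\<omega> \<in> {\<omega> \<in> space M. X \<omega> \<le> ereal y}"
    then have "X \<omega> < ereal c"
      using assms(1) by (auto intro: le_less_trans)
    then show "\<omega> \<in> space M - {\<omega> \<in> space M. ereal c \<le> X \<omega>}"
      using \<open>\<omega> \<in> _\<close> by (auto simp: not_le)
  qed
  then show ?thesis
    unfolding prob_le_def prob_ge_def by (simp add: prob_compl)
qed


lemma prob_le_le_below_gap:
  assumes "w < ereal c" "\<forall>d\<in>D. \<not> (y < d \<and> d < c)"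
  shows "prob_le w \<le> prob_le (ereal y)"
proof (cases w)
  case (real x)
  show ?thesis
  proof (cases "x \<le> y")
    case False
    then have "prob_le (ereal y) = prob_le (ereal x)"
      using assms real by (intro prob_le_gap) auto
    then show ?thesis
      using real by simp
  qed (simp add: real prob_le_mono)
qed (use prob_le_mono assms(1) in auto)

lemma ereal_le_lower_quantile_iff:
  assumes "0 < \<tau>" "\<tau> \<le> 1"
  shows "ereal c \<le> (LEAST w. \<tau> \<le> prob_le w) \<longleftrightarrow> 1 - \<tau> < prob_ge (ereal c)"
proof -
  let ?q = "Inf {w. \<tau> \<le> prob_le w}"
  obtain y where "y < c" and gap: "\<forall>d\<in>D. \<not> (y < d \<and> d < c)"
    using locally_finite_gap_below[OF finite_D_Icc] by blast
  then have prob_y: "prob_le (ereal y) = 1 - prob_ge (ereal c)"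
    by (rule prob_le_eq_1_minus_prob_ge)
  have "ereal c \<le> ?q \<longleftrightarrow> \<not> \<tau> \<le> prob_le (ereal y)"
  proof
    assume "ereal c \<le> ?q"
    show "\<not> \<tau> \<le> prob_le (ereal y)"
    proof
      assume "\<tau> \<le> prob_le (ereal y)"
      then have "?q \<le> ereal y"
        by (intro Inf_lower) simp
      then have "ereal c \<le> ereal y"
        using \<open>ereal c \<le> ?q\<close> by (rule order_trans[rotated])
      then show False
        using \<open>y < c\<close> by simp
    qed
  next
    assume not_y: "\<not> \<tau> \<le> prob_le (ereal y)"
    show "ereal c \<le> ?q"
    proof (rule ccontr)
      assume "\<not> ereal c \<le> ?q"
      then have "?q < ereal c"
        by simp
      then have "prob_le ?q \<le> prob_le (ereal y)"
        using gap by (rule prob_le_le_below_gap)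
      then show False
        using prob_le_Inf_ge[OF assms(2)] not_y by simp
    qed
  qed
  then show ?thesis
    using prob_y Least_prob_le_eq_Inf[OF assms(2)] by (simp add: not_le algebra_simps)
qed

lemma ereal_le_upper_quantile_iff:
  assumes "0 \<le> \<tau>"
  shows "ereal c \<le> (GREATEST w. 1 - \<tau> \<le> prob_ge w) \<longleftrightarrow> 1 - \<tau> \<le> prob_ge (ereal c)"
  unfolding Greatest_prob_ge_eq_Sup[OF assms]
proof
  assume "ereal c \<le> Sup {w. 1 - \<tau> \<le> prob_ge w}"
  then have "prob_ge (Sup {w. 1 - \<tau> \<le> prob_ge w}) \<le> prob_ge (ereal c)"
    by (rule prob_ge_antimono)
  then show "1 - \<tau> \<le> prob_ge (ereal c)"
    using prob_ge_Sup_ge[OF assms] by linarith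
qed (intro Sup_upper, simp)

end

section \<open>Quantile-optimal policies\<close>

lemma quantile_in_levels:
  fixes q :: "'p \<Rightarrow> ereal" and thr :: "'p \<Rightarrow> real \<Rightarrow> real"
  assumes finite_D: "\<And>a b. finite (D \<inter> {a..b})"
    and q_iff: "\<And>\<pi> c. ereal c \<le> q \<pi> \<longleftrightarrow> good (thr \<pi> c)"
    and thr_gap: "\<And>\<pi> x y. x \<le> y \<Longrightarrow> \<forall>d\<in>D. \<not> (x \<le> d \<and> d < y) \<Longrightarrow> thr \<pi> x = thr \<pi> y"
    and "q \<pi> = ereal x"
  shows "x \<in> D"
proof (rule ccontr)
  assume "x \<notin> D"
  obtain y where "x < y" and gap: "\<forall>d\<in>D. \<not> (x < d \<and> d < y)"
    using locally_finite_gap_above[OF finite_D] by blast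
  with \<open>x \<notin> D\<close> have "\<forall>d\<in>D. \<not> (x \<le> d \<and> d < y)"
    by (auto simp: le_less)
  then have "thr \<pi> x = thr \<pi> y"
    using \<open>x < y\<close> by (intro thr_gap) auto
  moreover have "good (thr \<pi> x)"
    using q_iff \<open>q \<pi> = ereal x\<close> by (metis order_refl)
  ultimately have "ereal y \<le> q \<pi>"
    using q_iff by metis
  then show False
    using \<open>x < y\<close> \<open>q \<pi> = ereal x\<close> by simp
qed

lemma bounded_locally_finite_valued_has_max:
  fixes q :: "'p \<Rightarrow> ereal"
  assumes finite_D: "\<And>a b. finite (D \<inter> {a..b})"
    and bounded: "\<And>\<pi>. q \<pi> \<le> ereal U"
    and in_D: "\<And>\<pi> x. q \<pi> = ereal x \<Longrightarrow> x \<in> D"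
  shows "\<exists>\<pi>1. \<forall>\<pi>. q \<pi> \<le> q \<pi>1"
proof (cases "\<forall>\<pi>. q \<pi> = -\<infinity>")
  case True
  then show ?thesis
    by simp
next
  case False
  then obtain \<pi>0 x0 where x0: "q \<pi>0 = ereal x0"
    using bounded by (metis ereal_cases ereal_infty_less_eq(1))
  define K where "K = {x \<in> D \<inter> {x0..U}. \<exists>\<pi>. q \<pi> = ereal x}"
  have "finite K"
    unfolding K_def using finite_D[of x0 U] by (rule finite_subset[rotated]) auto
  have "x0 \<in> K"
    unfolding K_def using x0 bounded[of \<pi>0] in_D by auto
  define c where "c = Max K"
  have "c \<in> K"
    unfolding c_def using \<open>finite K\<close> \<open>x0 \<in> K\<close> by (intro Max_in) auto
  then obtain \<pi>1 where "q \<pi>1 = ereal c"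
    unfolding K_def by auto
  have "q \<pi> \<le> ereal c" for \<pi>
  proof (cases "q \<pi>")
    case (real x)
    have "x0 \<le> c"
      unfolding c_def using \<open>finite K\<close> \<open>x0 \<in> K\<close> by (rule Max_ge)
    moreover have "x \<le> c" if "x0 \<le> x"
      unfolding c_def using \<open>finite K\<close> real in_D that bounded[of \<pi>]
      by (intro Max_ge) (auto simp: K_def)
    ultimately show ?thesis
      using real by (cases "x0 \<le> x") auto
  qed (use bounded[of \<pi>] in auto)
  then show ?thesis
    using \<open>q \<pi>1 = ereal c\<close> by metis
qed

text \<open>Here q \<pi> stands for a quantile and thr \<pi> c for the probability of wealth at least c
  under policy \<pi>: some policy attains the largest quantile c, and a policy that is optimal for
  the threshold c attains c as well.\<close>

lemma quantile_optimal_from_threshold_optimal: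
  fixes q :: "'p \<Rightarrow> ereal" and thr :: "'p \<Rightarrow> real \<Rightarrow> real"
  assumes finite_D: "\<And>a b. finite (D \<inter> {a..b})"
    and bounded: "\<And>\<pi>. q \<pi> \<le> ereal U"
    and q_iff: "\<And>\<pi> c. ereal c \<le> q \<pi> \<longleftrightarrow> good (thr \<pi> c)"
    and good_mono: "\<And>p p'. good p \<Longrightarrow> p \<le> p' \<Longrightarrow> good p'"
    and thr_gap: "\<And>\<pi> x y. x \<le> y \<Longrightarrow> \<forall>d\<in>D. \<not> (x \<le> d \<and> d < y) \<Longrightarrow> thr \<pi> x = thr \<pi> y"
    and thr_optimal: "\<And>c. \<exists>\<sigma>. admissible \<sigma> \<and> (\<forall>\<pi>. thr \<pi> c \<le> thr \<sigma> c)"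
  shows "\<exists>\<sigma>. admissible \<sigma> \<and> (\<forall>\<pi>. q \<pi> \<le> q \<sigma>)"
proof -
  have "x \<in> D" if "q \<pi> = ereal x" for \<pi> x
    using quantile_in_levels[where q = q and thr = thr and good = good, OF finite_D q_iff thr_gap that] .
  then have "\<exists>\<pi>1. \<forall>\<pi>. q \<pi> \<le> q \<pi>1"
    by (rule bounded_locally_finite_valued_has_max[where q = q and D = D and U = U, OF finite_D bounded])
  then obtain \<pi>1 where max: "\<And>\<pi>. q \<pi> \<le> q \<pi>1"
    by blast
  show ?thesis
  proof (cases "q \<pi>1")
    case (real c)
    obtain \<sigma> where \<sigma>: "admissible \<sigma>" "\<forall>\<pi>. thr \<pi> c \<le> thr \<sigma> c"
      using thr_optimal[of c] by blast
    have "good (thr \<sigma> c)"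
      using q_iff[of c \<pi>1] real \<sigma>(2) good_mono by auto
    then have "q \<pi>1 \<le> q \<sigma>"
      using q_iff real by simp
    then show ?thesis
      using \<sigma>(1) max order_trans by blast
  qed (use max thr_optimal[of 0] bounded[of \<pi>1] in auto)
qed

context
  fixes P :: "'s::finite \<Rightarrow> 'a::finite \<Rightarrow> 's pmf" and r :: "'s \<Rightarrow> 'a \<Rightarrow> real" and s0 :: 's
begin

lemma locally_finite_valued_ep_wealth:
  assumes "constant_sign r"
  shows "locally_finite_valued (path_measure P s0 \<pi>) (ep_wealth r) (wealth_levels r)"
proof -
  have "ep_wealth r \<in> borel_measurable (path_measure P s0 \<pi>)"
    using measurable_ep_wealth[OF assms] by (simp add: measurable_cong_sets[OF sets_path_measure refl])
  then show ?thesis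
    unfolding locally_finite_valued_def locally_finite_valued_axioms_def
    using prob_space_path_measure ep_wealth_cases[OF assms] finite_wealth_levels_Icc[OF assms] by blast
qed

lemma prob_wealth_ge_eq_prob_ge:
  assumes "constant_sign r"
  shows "prob_wealth_ge P r c \<pi> s0 =
    locally_finite_valued.prob_ge (path_measure P s0 \<pi>) (ep_wealth r) (ereal c)"
  unfolding prob_wealth_ge_def locally_finite_valued.prob_ge_def[OF locally_finite_valued_ep_wealth[OF assms]] ..

lemma ereal_le_lower_quantile_iff_prob_wealth_ge:
  assumes "constant_sign r" "0 < \<tau>" "\<tau> \<le> 1"
  shows "ereal c \<le> lower_quantile P r s0 \<pi> \<tau> \<longleftrightarrow> 1 - \<tau> < prob_wealth_ge P r c \<pi> s0"
proof -
  interpret locally_finite_valued "path_measure P s0 \<pi>" "ep_wealth r" "wealth_levels r"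
    by (rule locally_finite_valued_ep_wealth[OF assms(1)])
  show ?thesis
    unfolding lower_quantile_def cdf_w_def prob_le_def[symmetric] prob_wealth_ge_eq_prob_ge[OF assms(1)]
    by (rule ereal_le_lower_quantile_iff[OF assms(2,3)])
qed

lemma ereal_le_upper_quantile_iff_prob_wealth_ge:
  assumes "constant_sign r" "0 \<le> \<tau>"
  shows "ereal c \<le> upper_quantile P r s0 \<pi> \<tau> \<longleftrightarrow> 1 - \<tau> \<le> prob_wealth_ge P r c \<pi> s0"
proof -
  interpret locally_finite_valued "path_measure P s0 \<pi>" "ep_wealth r" "wealth_levels r"
    by (rule locally_finite_valued_ep_wealth[OF assms(1)])
  show ?thesis
    unfolding upper_quantile_def dcdf_w_def prob_ge_def[symmetric] prob_wealth_ge_eq_prob_ge[OF assms(1)]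
    by (rule ereal_le_upper_quantile_iff[OF assms(2)])
qed

lemma prob_wealth_ge_gap:
  assumes "constant_sign r" "x \<le> y" "\<forall>d\<in>wealth_levels r. \<not> (x \<le> d \<and> d < y)"
  shows "prob_wealth_ge P r x \<pi> s0 = prob_wealth_ge P r y \<pi> s0"
  unfolding prob_wealth_ge_eq_prob_ge[OF assms(1)]
  by (rule locally_finite_valued.prob_ge_gap[OF locally_finite_valued_ep_wealth[OF assms(1)] assms(2,3), symmetric])

lemma prob_wealth_ge_optimal_policy_exists:
  assumes "constant_sign r"
  shows "\<exists>\<sigma>. sdwm_policy r \<sigma> \<and> (\<forall>\<pi>. prob_wealth_ge P r c \<pi> s0 \<le> prob_wealth_ge P r c \<sigma> s0)"
  using assms prob_wealth_ge_optimal_of_nonpos prob_wealth_ge_optimal_of_nonneg sdwm_policy_wealth_policy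
  unfolding constant_sign_def by metis

lemma lower_quantile_optimal_policy_exists:
  assumes "constant_sign r" "0 < \<tau>" "\<tau> \<le> 1" "\<And>\<pi>. lower_quantile P r s0 \<pi> \<tau> \<le> ereal U"
  shows "\<exists>\<sigma>. sdwm_policy r \<sigma> \<and> (\<forall>\<pi>. lower_quantile P r s0 \<pi> \<tau> \<le> lower_quantile P r s0 \<sigma> \<tau>)"
proof (rule quantile_optimal_from_threshold_optimal[where D = "wealth_levels r"])
  show "ereal c \<le> lower_quantile P r s0 \<pi> \<tau> \<longleftrightarrow> 1 - \<tau> < prob_wealth_ge P r c \<pi> s0" for \<pi> c
    using assms(1-3) by (rule ereal_le_lower_quantile_iff_prob_wealth_ge)
qed (use assms in \<open>auto simp: finite_wealth_levels_Icc prob_wealth_ge_gap prob_wealth_ge_optimal_policy_exists\<close>)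

lemma upper_quantile_optimal_policy_exists:
  assumes "constant_sign r" "0 \<le> \<tau>" "\<And>\<pi>. upper_quantile P r s0 \<pi> \<tau> \<le> ereal U"
  shows "\<exists>\<sigma>. sdwm_policy r \<sigma> \<and> (\<forall>\<pi>. upper_quantile P r s0 \<pi> \<tau> \<le> upper_quantile P r s0 \<sigma> \<tau>)"
proof (rule quantile_optimal_from_threshold_optimal[where D = "wealth_levels r"])
  show "ereal c \<le> upper_quantile P r s0 \<pi> \<tau> \<longleftrightarrow> 1 - \<tau> \<le> prob_wealth_ge P r c \<pi> s0" for \<pi> c
    using assms(1,2) by (rule ereal_le_upper_quantile_iff_prob_wealth_ge)
qed (use assms in \<open>auto simp: finite_wealth_levels_Icc prob_wealth_ge_gap prob_wealth_ge_optimal_policy_exists\<close>)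

lemma ep_wealth_nonpos: "\<forall>s a. r s a \<le> 0 \<Longrightarrow> ep_wealth r \<omega> \<le> 0"
  using INF_lower[of 0 UNIV "\<lambda>n. ereal (hist_wealth r (stake n \<omega>))"] by (simp add: ep_wealth_eq_INF zero_ereal_def)

lemma lower_quantile_le_0:
  assumes "\<forall>s a. r s a \<le> 0" "\<tau> \<le> 1"
  shows "lower_quantile P r s0 \<pi> \<tau> \<le> ereal 0"
proof -
  have "constant_sign r"
    using assms(1) by (simp add: constant_sign_def)
  interpret locally_finite_valued "path_measure P s0 \<pi>" "ep_wealth r" "wealth_levels r"
    by (rule locally_finite_valued_ep_wealth[OF \<open>constant_sign r\<close>])
  have "prob_le (ereal 0) = 1"
    using ep_wealth_nonpos[OF assms(1)] prob_space unfolding prob_le_def by (simp add: zero_ereal_def)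
  then show ?thesis
    unfolding lower_quantile_def cdf_w_def prob_le_def[symmetric] Least_prob_le_eq_Inf[OF assms(2)]
    using assms(2) by (intro Inf_lower) simp
qed

lemma upper_quantile_le_0:
  assumes "\<forall>s a. r s a \<le> 0" "0 \<le> \<tau>" "\<tau> < 1"
  shows "upper_quantile P r s0 \<pi> \<tau> \<le> ereal 0"
proof -
  have "constant_sign r"
    using assms(1) by (simp add: constant_sign_def)
  interpret locally_finite_valued "path_measure P s0 \<pi>" "ep_wealth r" "wealth_levels r"
    by (rule locally_finite_valued_ep_wealth[OF \<open>constant_sign r\<close>])
  have "w \<le> ereal 0" if "1 - \<tau> \<le> prob_ge w" for w
  proof (rule ccontr)
    assume "\<not> w \<le> ereal 0"
    then have "{\<omega> \<in> space (path_measure P s0 \<pi>). w \<le> ep_wealth r \<omega>} = {}"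
      using ep_wealth_nonpos[OF assms(1)] by (auto simp: zero_ereal_def intro: order_trans)
    then have "prob_ge w = 0"
      unfolding prob_ge_def by (simp only: measure_empty)
    then show False
      using that assms(3) by simp
  qed
  then show ?thesis
    unfolding upper_quantile_def dcdf_w_def prob_ge_def[symmetric] Greatest_prob_ge_eq_Sup[OF assms(2)]
    by (intro Sup_least) simp
qed

end

theorem proposition3:
  fixes P :: "'s::finite \<Rightarrow> 'a::finite \<Rightarrow> 's pmf"
    and r :: "'s \<Rightarrow> 'a \<Rightarrow> real"
    and s0 :: 's
  shows
    "(\<forall>\<tau>::real. 0 < \<tau> \<and> \<tau> \<le> 1 \<longrightarrow>
        ((\<forall>s a. r s a \<le> 0) \<or>
         ((\<forall>s a. r s a \<ge> 0) \<and>
          (\<exists>B::real. \<forall>\<pi>. lower_quantile P r s0 \<pi> \<tau> \<le> ereal B))) \<longrightarrow>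
        (\<exists>\<pi>. sdwm_policy r \<pi> \<and>
              (\<forall>\<pi>'. lower_quantile P r s0 \<pi>' \<tau> \<le> lower_quantile P r s0 \<pi> \<tau>)))
     \<and>
     (\<forall>\<tau>::real. 0 \<le> \<tau> \<and> \<tau> < 1 \<longrightarrow>
        ((\<forall>s a. r s a \<le> 0) \<or>
         ((\<forall>s a. r s a \<ge> 0) \<and>
          (\<exists>B::real. \<forall>\<pi>. upper_quantile P r s0 \<pi> \<tau> \<le> ereal B))) \<longrightarrow>
        (\<exists>\<pi>. sdwm_policy r \<pi> \<and>
              (\<forall>\<pi>'. upper_quantile P r s0 \<pi>' \<tau> \<le> upper_quantile P r s0 \<pi> \<tau>)))"
proof (intro conjI allI impI)
  fix \<tau> :: real
  assume \<tau>: "0 < \<tau> \<and> \<tau> \<le> 1"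
    and "(\<forall>s a. r s a \<le> 0) \<or> (\<forall>s a. r s a \<ge> 0) \<and> (\<exists>B. \<forall>\<pi>. lower_quantile P r s0 \<pi> \<tau> \<le> ereal B)"
  then obtain B where "constant_sign r" "\<And>\<pi>. lower_quantile P r s0 \<pi> \<tau> \<le> ereal B"
    using lower_quantile_le_0 unfolding constant_sign_def by blast
  then show "\<exists>\<pi>. sdwm_policy r \<pi> \<and> (\<forall>\<pi>'. lower_quantile P r s0 \<pi>' \<tau> \<le> lower_quantile P r s0 \<pi> \<tau>)"
    using lower_quantile_optimal_policy_exists \<tau> by blast
next
  fix \<tau> :: real
  assume \<tau>: "0 \<le> \<tau> \<and> \<tau> < 1"
    and "(\<forall>s a. r s a \<le> 0) \<or> (\<forall>s a. r s a \<ge> 0) \<and> (\<exists>B. \<forall>\<pi>. upper_quantile P r s0 \<pi> \<tau> \<le> ereal B)"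
  then obtain B where "constant_sign r" "\<And>\<pi>. upper_quantile P r s0 \<pi> \<tau> \<le> ereal B"
    using upper_quantile_le_0 unfolding constant_sign_def by blast
  then show "\<exists>\<pi>. sdwm_policy r \<pi> \<and> (\<forall>\<pi>'. upper_quantile P r s0 \<pi>' \<tau> \<le> upper_quantile P r s0 \<pi> \<tau>)"
    using upper_quantile_optimal_policy_exists \<tau> by blast
qed

end
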